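(* For $\beta\ge4$, the quantum query complexity of the following task is $\Omega(\beta)$: given a block-encoding $U$ of $\sqrt{H}$ for a Hamiltonian $H$, prepare a quantum state $\rho$ with $\|\rho-e^{-\beta H}/\mathcal{Z}\|_1\le 0.01$, where $\mathcal Z=\operatorname{tr}(e^{-\beta H})$.
   Context: A block-encoding of a matrix $A$ is a unitary $U$ whose upper-left block equals $A$. One query means one application of $U$, $U^\dagger$, or their controlled versions. $\|\cdot\|_1$ is the trace norm. The query complexity is the minimum number of queries of a quantum algorithm that achieves the stated preparation (succeeding for every valid $H$). *)

theory Defs
  imports "Jordan_Normal_Form.Schur_Decomposition"
begin

definition unitary_mat :: "nat \<Rightarrow> complex mat \<Rightarrow> bool" where
  "unitary_mat n U \<longleftrightarrow> U \<in> carrier_mat n n \<and> U * mat_adjoint U = 1\<^sub>m n \<and> mat_adjoint U * U = 1\<^sub>m n"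

definition hermitian_mat :: "nat \<Rightarrow> complex mat \<Rightarrow> bool" where
  "hermitian_mat n A \<longleftrightarrow> A \<in> carrier_mat n n \<and> mat_adjoint A = A"

definition psd_mat :: "nat \<Rightarrow> complex mat \<Rightarrow> bool" where
  "psd_mat n A \<longleftrightarrow> hermitian_mat n A \<and>
     (\<forall>v \<in> carrier_vec n. Re (conjugate v \<bullet> (A *\<^sub>v v)) \<ge> 0)"

definition mat_trace :: "complex mat \<Rightarrow> complex" where
  "mat_trace A = (\<Sum>i<dim_row A. A $$ (i, i))"

text \<open>Functional calculus for Hermitian matrices via a spectral decomposition
  \<open>A = V diag(d) V\<^sup>\<dagger>\<close> (the result is independent of the chosen decomposition).\<close>
definition spectral_dec :: "nat \<Rightarrow> complex mat \<Rightarrow> complex mat \<Rightarrow> (nat \<Rightarrow> real) \<Rightarrow> bool" where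
  "spectral_dec n A V d \<longleftrightarrow> unitary_mat n V \<and>
     A = V * mat_diag n (\<lambda>i. complex_of_real (d i)) * mat_adjoint V"

definition mat_fun :: "(real \<Rightarrow> real) \<Rightarrow> complex mat \<Rightarrow> complex mat" where
  "mat_fun f A = (let n = dim_row A;
                      (V, d) = (SOME (V, d). spectral_dec n A V d)
                  in V * mat_diag n (\<lambda>i. complex_of_real (f (d i))) * mat_adjoint V)"

definition mat_sqrt :: "complex mat \<Rightarrow> complex mat" where
  "mat_sqrt A = mat_fun sqrt A"

definition trace_norm :: "complex mat \<Rightarrow> real" where
  "trace_norm A = Re (mat_trace (mat_sqrt (mat_adjoint A * A)))"

definition gibbs_state :: "real \<Rightarrow> complex mat \<Rightarrow> complex mat" where
  "gibbs_state \<beta> H = (let G = mat_fun (\<lambda>x. exp (- \<beta> * x)) H in (1 / mat_trace G) \<cdot>\<^sub>m G)"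

definition block_encoding :: "nat \<Rightarrow> nat \<Rightarrow> complex mat \<Rightarrow> complex mat \<Rightarrow> bool" where
  "block_encoding N M A U \<longleftrightarrow> N \<le> M \<and> A \<in> carrier_mat N N \<and> unitary_mat M U \<and>
     (\<forall>i<N. \<forall>j<N. U $$ (i, j) = A $$ (i, j))"

text \<open>Kronecker product (row-major index convention).\<close>
definition kron :: "complex mat \<Rightarrow> complex mat \<Rightarrow> complex mat" where
  "kron A B = mat (dim_row A * dim_row B) (dim_col A * dim_col B)
     (\<lambda>(i, j). A $$ (i div dim_row B, j div dim_col B) * B $$ (i mod dim_row B, j mod dim_col B))"

text \<open>Every query acts on a register of dimension \<open>2M\<close> (control qubit \<open>\<otimes>\<close> the \<open>M\<close>-dim
  register of \<open>U\<close>); uncontrolled queries ignore the control qubit.\<close>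
datatype qkind = QU | QUadj | QCU | QCUadj

definition query_op :: "nat \<Rightarrow> complex mat \<Rightarrow> qkind \<Rightarrow> complex mat" where
  "query_op M U k = (case k of
      QU \<Rightarrow> kron (1\<^sub>m 2) U
    | QUadj \<Rightarrow> kron (1\<^sub>m 2) (mat_adjoint U)
    | QCU \<Rightarrow> four_block_mat (1\<^sub>m M) (0\<^sub>m M M) (0\<^sub>m M M) U
    | QCUadj \<Rightarrow> four_block_mat (1\<^sub>m M) (0\<^sub>m M M) (0\<^sub>m M M) (mat_adjoint U))"

text \<open>An algorithm works on a space of dimension \<open>D = 2M\<cdot>R = N\<cdot>S\<close>: starting from
  the basis state \<open>|0\<rangle>\<close>, it applies \<open>V\<^sub>0\<close>, then for each step \<open>(k\<^sub>t, V\<^sub>t)\<close> the query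
  \<open>query_op k\<^sub>t \<otimes> I\<^sub>R\<close> followed by the unitary \<open>V\<^sub>t\<close>. The output is the reduced state
  on the first (\<open>N\<close>-dimensional) tensor factor in the decomposition \<open>D = N\<cdot>S\<close>.
  The number of queries is the number of steps.\<close>
definition valid_alg :: "nat \<Rightarrow> nat \<Rightarrow> nat \<Rightarrow> nat \<Rightarrow> complex mat \<Rightarrow> (qkind \<times> complex mat) list \<Rightarrow> bool" where
  "valid_alg N M R S V0 steps \<longleftrightarrow> 2 * M * R = N * S \<and> unitary_mat (2 * M * R) V0 \<and>
     (\<forall>st \<in> set steps. unitary_mat (2 * M * R) (snd st))"

definition alg_unitary :: "nat \<Rightarrow> nat \<Rightarrow> complex mat \<Rightarrow> (qkind \<times> complex mat) list \<Rightarrow> complex mat \<Rightarrow> complex mat" where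
  "alg_unitary M R V0 steps U =
     foldl (\<lambda>W (k, V). V * kron (query_op M U k) (1\<^sub>m R) * W) V0 steps"

definition partial_trace_2 :: "nat \<Rightarrow> nat \<Rightarrow> complex vec \<Rightarrow> complex mat" where
  "partial_trace_2 N S \<psi> = mat N N (\<lambda>(i, j). \<Sum>s<S. \<psi> $ (i * S + s) * cnj (\<psi> $ (j * S + s)))"

definition alg_output :: "nat \<Rightarrow> nat \<Rightarrow> nat \<Rightarrow> nat \<Rightarrow> complex mat \<Rightarrow> (qkind \<times> complex mat) list \<Rightarrow> complex mat \<Rightarrow> complex mat" where
  "alg_output N M R S V0 steps U =
     partial_trace_2 N S (alg_unitary M R V0 steps U *\<^sub>v unit_vec (2 * M * R) 0)"

definition solves_gibbs :: "real \<Rightarrow> nat \<Rightarrow> nat \<Rightarrow> nat \<Rightarrow> nat \<Rightarrow> complex mat \<Rightarrow> (qkind \<times> complex mat) list \<Rightarrow> bool" where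
  "solves_gibbs \<beta> N M R S V0 steps \<longleftrightarrow>
     (\<forall>H U. psd_mat N H \<longrightarrow> block_encoding N M (mat_sqrt H) U \<longrightarrow>
        trace_norm (alg_output N M R S V0 steps U - gibbs_state \<beta> H) \<le> 0.01)"

end

(*
  Compare the two Hamiltonians diag(a, b) and diag(b, a) with a = 1/4 and b = a + 1/beta.
  Their square roots are block-encoded by the reflections [[C, S], [S, -C]], and these two
  encodings are O(1/beta) apart in operator norm.  By the hybrid argument, the final states of a
  T-query algorithm run on the two encodings are O(T/beta) apart, and hence so are the
  probabilities of outcome 0 on the system register.  The two Gibbs states, however, give the
  first basis state the weights 1/(1 + e^-1) and e^-1/(1 + e^-1), which differ by more than 1/3.
  Since trace-norm accuracy 0.01 controls every entry, 1/3 <= 0.02 + 4T/beta, i.e. T >= beta/20.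
*)
theory Submission
  imports Defs "HOL-Analysis.L2_Norm"
begin

lemma index_mult_mat_sum:
  assumes "A \<in> carrier_mat n m" and "B \<in> carrier_mat m k" and "i < n" and "j < k"
  shows "(A * B) $$ (i, j) = (\<Sum>l<m. A $$ (i, l) * B $$ (l, j))"
  using assms by (simp add: scalar_prod_def atLeast0LessThan)

lemma index_mult_mat_vec_sum:
  assumes "A \<in> carrier_mat n m" and "v \<in> carrier_vec m" and "i < n"
  shows "(A *\<^sub>v v) $ i = (\<Sum>l<m. A $$ (i, l) * v $ l)"
  using assms by (simp add: scalar_prod_def atLeast0LessThan)

lemma mat_adjoint_dim [simp]:
  "dim_row (mat_adjoint A) = dim_col A" "dim_col (mat_adjoint A) = dim_row A"
  unfolding mat_adjoint_def by simp_all

lemma index_mat_adjoint [simp]: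
  "i < dim_col A \<Longrightarrow> j < dim_row A \<Longrightarrow> mat_adjoint (A :: complex mat) $$ (i, j) = cnj (A $$ (j, i))"
  unfolding mat_adjoint_def by (simp add: mat_of_rows_index)

lemma mat_adjoint_carrier [simp]: "A \<in> carrier_mat n m \<Longrightarrow> mat_adjoint A \<in> carrier_mat m n"
  unfolding carrier_mat_def by simp

lemma mat_adjoint_adjoint [simp]: "mat_adjoint (mat_adjoint (A :: complex mat)) = A"
  by (rule eq_matI) simp_all

lemma mat_adjoint_one [simp]: "mat_adjoint (1\<^sub>m n :: complex mat) = 1\<^sub>m n"
  by (rule eq_matI) auto

lemma mat_adjoint_mult:
  assumes A: "(A :: complex mat) \<in> carrier_mat n m" and B: "B \<in> carrier_mat m k"
  shows "mat_adjoint (A * B) = mat_adjoint B * mat_adjoint A"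
proof (rule eq_matI)
  fix i j assume "i < dim_row (mat_adjoint B * mat_adjoint A)" "j < dim_col (mat_adjoint B * mat_adjoint A)"
  then have i: "i < k" and j: "j < n" using A B by auto
  have "mat_adjoint (A * B) $$ (i, j) = cnj ((A * B) $$ (j, i))" using A B i j by simp
  also have "\<dots> = (\<Sum>l<m. mat_adjoint B $$ (i, l) * mat_adjoint A $$ (l, j))"
    unfolding index_mult_mat_sum[OF A B j i] cnj_sum using A B i j by (simp add: mult.commute)
  also have "\<dots> = (mat_adjoint B * mat_adjoint A) $$ (i, j)"
    using A B i j by (simp only: index_mult_mat_sum[of _ k m _ n] mat_adjoint_carrier)
  finally show "mat_adjoint (A * B) $$ (i, j) = (mat_adjoint B * mat_adjoint A) $$ (i, j)" .
qed (use A B in auto)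

lemma unitary_mat_adjoint: "unitary_mat n U \<Longrightarrow> unitary_mat n (mat_adjoint U)"
  unfolding unitary_mat_def by simp

lemma hermitian_mat_adjoint_mult_self:
  "(X :: complex mat) \<in> carrier_mat n n \<Longrightarrow> hermitian_mat n (mat_adjoint X * X)"
  unfolding hermitian_mat_def by (simp add: mat_adjoint_mult[of _ n n _ n] mult_carrier_mat[of _ n n])

lemma unitary_mat_cols_orthonormal:
  assumes "unitary_mat n V" and "l < n" and "k < n"
  shows "(\<Sum>i<n. cnj (V $$ (i, l)) * V $$ (i, k)) = (if l = k then 1 else 0)"
proof -
  have V: "V \<in> carrier_mat n n" and "mat_adjoint V * V = 1\<^sub>m n"
    using assms(1) unfolding unitary_mat_def by auto
  then have "(mat_adjoint V * V) $$ (l, k) = (if l = k then 1 else 0)" using assms by simp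
  then show ?thesis
    unfolding index_mult_mat_sum[OF mat_adjoint_carrier[OF V] V assms(2,3)] using V assms by simp
qed

lemma unitary_mat_rows_orthonormal:
  assumes "unitary_mat n V" and "i < n" and "j < n"
  shows "(\<Sum>k<n. V $$ (i, k) * cnj (V $$ (j, k))) = (if i = j then 1 else 0)"
proof -
  have V: "V \<in> carrier_mat n n" and "V * mat_adjoint V = 1\<^sub>m n"
    using assms(1) unfolding unitary_mat_def by auto
  then have "(V * mat_adjoint V) $$ (i, j) = (if i = j then 1 else 0)" using assms by simp
  then show ?thesis
    unfolding index_mult_mat_sum[OF V mat_adjoint_carrier[OF V] assms(2,3)] using V assms by simp
qed

lemma index_mat_diag_same [simp]: "k < n \<Longrightarrow> mat_diag n f $$ (k, k) = f k"
  unfolding mat_diag_def by simp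

lemma index_mult_diag_mult_adjoint:
  assumes V: "V \<in> carrier_mat n n" and "i < n" and "j < n"
  shows "(V * mat_diag n g * mat_adjoint V) $$ (i, j) = (\<Sum>k<n. V $$ (i, k) * g k * cnj (V $$ (j, k)))"
proof -
  have "V * mat_diag n g \<in> carrier_mat n n" using V by simp
  from index_mult_mat_sum[OF this mat_adjoint_carrier[OF V] assms(2,3)] show ?thesis
    using assms by (simp add: mat_diag_mult_right[OF V])
qed

lemma mat_trace_unitary_conj_diag:
  assumes "unitary_mat n V"
  shows "mat_trace (V * mat_diag n g * mat_adjoint V) = (\<Sum>k<n. g k)"
proof -
  have V: "V \<in> carrier_mat n n" using assms unfolding unitary_mat_def by simp
  have "mat_trace (V * mat_diag n g * mat_adjoint V) = (\<Sum>i<n. (V * mat_diag n g * mat_adjoint V) $$ (i, i))"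
    unfolding mat_trace_def using V by simp
  also have "\<dots> = (\<Sum>i<n. \<Sum>k<n. V $$ (i, k) * g k * cnj (V $$ (i, k)))"
    by (intro sum.cong refl) (rule index_mult_diag_mult_adjoint[OF V]; simp)
  also have "\<dots> = (\<Sum>k<n. g k * (\<Sum>i<n. cnj (V $$ (i, k)) * V $$ (i, k)))"
    by (subst sum.swap) (simp add: sum_distrib_left mult_ac)
  also have "\<dots> = (\<Sum>k<n. g k)"
    using unitary_mat_cols_orthonormal[OF assms] by simp
  finally show ?thesis .
qed

lemma mat_mult_2x2_eqI:
  assumes A: "A \<in> carrier_mat 2 2" and B: "B \<in> carrier_mat 2 2" and C: "C \<in> carrier_mat 2 2"
    and "A $$ (0, 0) * B $$ (0, 0) + A $$ (0, 1) * B $$ (1, 0) = C $$ (0, 0)"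
    and "A $$ (0, 0) * B $$ (0, 1) + A $$ (0, 1) * B $$ (1, 1) = C $$ (0, 1)"
    and "A $$ (1, 0) * B $$ (0, 0) + A $$ (1, 1) * B $$ (1, 0) = C $$ (1, 0)"
    and "A $$ (1, 0) * B $$ (0, 1) + A $$ (1, 1) * B $$ (1, 1) = C $$ (1, 1)"
  shows "A * B = C"
proof (rule eq_matI)
  fix i j assume "i < dim_row C" "j < dim_col C"
  then have ij: "i < 2" "j < 2" using C by auto
  have "(A * B) $$ (i, j) = A $$ (i, 0) * B $$ (0, j) + A $$ (i, 1) * B $$ (1, j)"
    using index_mult_mat_sum[OF A B ij] by (simp add: numeral_2_eq_2)
  also have "\<dots> = C $$ (i, j)"
    using ij assms(4-) by (cases i; cases j) (auto simp: less_Suc_eq numeral_2_eq_2)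
  finally show "(A * B) $$ (i, j) = C $$ (i, j)" .
qed (use A B C in auto)

lemma sum_lessThan_mult_split:
  "(\<Sum>j<n * R. (g :: nat \<Rightarrow> 'a :: comm_monoid_add) j) = (\<Sum>q<n. \<Sum>r<R. g (q * R + r))"
proof -
  have "(\<Sum>j<n * R. g j) = (\<Sum>q<n. sum g {q * R..<q * R + R})" by (rule sum.nat_group[symmetric])
  also have "\<dots> = (\<Sum>q<n. \<Sum>r<R. g (q * R + r))"
    by (simp add: sum.atLeastLessThan_shift_0 atLeast0LessThan comp_def)
  finally show ?thesis .
qed

lemma block_index_less:
  assumes "p < (K :: nat)" and "m < n"
  shows "p * n + m < K * n"
proof -
  have "Suc p * n \<le> K * n" using assms(1) by (intro mult_le_mono1) simp
  then show ?thesis using assms(2) by simp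
qed

section \<open>Euclidean norm and operator-norm bounds\<close>

definition vec_norm :: "complex vec \<Rightarrow> real" where
  "vec_norm v = L2_set (\<lambda>i. cmod (v $ i)) {..<dim_vec v}"

definition op_norm_le :: "complex mat \<Rightarrow> nat \<Rightarrow> real \<Rightarrow> bool" where
  "op_norm_le A n e \<longleftrightarrow> (\<forall>w \<in> carrier_vec n. vec_norm (A *\<^sub>v w) \<le> e * vec_norm w)"

lemma vec_norm_nonneg: "vec_norm v \<ge> 0"
  unfolding vec_norm_def by simp

lemma vec_norm_power2: "(vec_norm v)\<^sup>2 = (\<Sum>i<dim_vec v. (cmod (v $ i))\<^sup>2)"
  unfolding vec_norm_def L2_set_def by (simp add: sum_nonneg)

lemma vec_norm_power2_complex: "complex_of_real ((vec_norm v)\<^sup>2) = (\<Sum>i<dim_vec v. v $ i * cnj (v $ i))"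
  unfolding vec_norm_power2 of_real_sum by (intro sum.cong refl) (rule complex_norm_square)

lemma vec_norm_add_le:
  assumes a: "a \<in> carrier_vec n" and b: "b \<in> carrier_vec n"
  shows "vec_norm (a + b) \<le> vec_norm a + vec_norm b"
proof -
  have "vec_norm (a + b) \<le> L2_set (\<lambda>i. cmod (a $ i) + cmod (b $ i)) {..<n}"
    unfolding vec_norm_def using a b by (auto intro!: L2_set_mono norm_triangle_ineq)
  also have "\<dots> \<le> vec_norm a + vec_norm b"
    unfolding vec_norm_def using a b by (simp add: L2_set_triangle_ineq)
  finally show ?thesis .
qed

lemma vec_norm_zero_vec [simp]: "vec_norm (0\<^sub>v n) = 0"
  unfolding vec_norm_def L2_set_def by simp

lemma vec_norm_unit_vec: "vec_norm (unit_vec n 0) \<le> 1"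
proof -
  have "(vec_norm (unit_vec n 0))\<^sup>2 = (\<Sum>i<n. if i = 0 then 1 else 0)"
    unfolding vec_norm_power2 by (intro sum.cong refl) (auto simp: unit_vec_def)
  also have "\<dots> \<le> 1" by simp
  finally show ?thesis by (simp add: power_le_one_iff vec_norm_nonneg)
qed

lemma unitary_mat_vec_norm:
  assumes U: "unitary_mat n V" and v: "v \<in> carrier_vec n"
  shows "vec_norm (V *\<^sub>v v) = vec_norm v"
proof -
  have V: "V \<in> carrier_mat n n" using U unfolding unitary_mat_def by simp
  have "complex_of_real ((vec_norm (V *\<^sub>v v))\<^sup>2) = (\<Sum>i<n. (V *\<^sub>v v) $ i * cnj ((V *\<^sub>v v) $ i))"
    unfolding vec_norm_power2_complex using V by simp
  also have "\<dots> = (\<Sum>i<n. \<Sum>k<n. \<Sum>l<n. (V $$ (i, k) * v $ k) * (cnj (V $$ (i, l)) * cnj (v $ l)))"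
    using V v by (simp del: index_mult_mat_vec add: index_mult_mat_vec_sum sum_product)
  also have "\<dots> = (\<Sum>k<n. \<Sum>i<n. \<Sum>l<n. (V $$ (i, k) * v $ k) * (cnj (V $$ (i, l)) * cnj (v $ l)))"
    by (rule sum.swap)
  also have "\<dots> = (\<Sum>k<n. \<Sum>l<n. \<Sum>i<n. (V $$ (i, k) * v $ k) * (cnj (V $$ (i, l)) * cnj (v $ l)))"
    by (intro sum.cong refl sum.swap)
  also have "\<dots> = (\<Sum>k<n. \<Sum>l<n. v $ k * cnj (v $ l) * (\<Sum>i<n. cnj (V $$ (i, l)) * V $$ (i, k)))"
    by (simp add: sum_distrib_left mult_ac)
  also have "\<dots> = (\<Sum>k<n. v $ k * cnj (v $ k))"
    by (simp add: unitary_mat_cols_orthonormal[OF U] if_distrib cong: if_cong)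
  also have "\<dots> = complex_of_real ((vec_norm v)\<^sup>2)" unfolding vec_norm_power2_complex using v by simp
  finally have "(vec_norm (V *\<^sub>v v))\<^sup>2 = (vec_norm v)\<^sup>2" by (simp only: of_real_eq_iff)
  then show ?thesis using vec_norm_nonneg by simp
qed

lemma op_norm_leI_power2:
  assumes "e \<ge> 0" and "\<And>w. w \<in> carrier_vec n \<Longrightarrow> (vec_norm (A *\<^sub>v w))\<^sup>2 \<le> e\<^sup>2 * (vec_norm w)\<^sup>2"
  shows "op_norm_le A n e"
  unfolding op_norm_le_def
proof
  fix w :: "complex vec" assume "w \<in> carrier_vec n"
  then have "(vec_norm (A *\<^sub>v w))\<^sup>2 \<le> (e * vec_norm w)\<^sup>2" using assms(2) by (simp add: power_mult_distrib)
  then show "vec_norm (A *\<^sub>v w) \<le> e * vec_norm w"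
    using assms(1) vec_norm_nonneg by (simp add: power_mono_iff)
qed

lemma op_norm_leD_power2:
  assumes "op_norm_le A n e" and "w \<in> carrier_vec n"
  shows "(vec_norm (A *\<^sub>v w))\<^sup>2 \<le> e\<^sup>2 * (vec_norm w)\<^sup>2"
proof -
  have "vec_norm (A *\<^sub>v w) \<le> e * vec_norm w" using assms unfolding op_norm_le_def by simp
  then have "(vec_norm (A *\<^sub>v w))\<^sup>2 \<le> (e * vec_norm w)\<^sup>2" using vec_norm_nonneg by (rule power_mono)
  then show ?thesis by (simp add: power_mult_distrib)
qed

lemma op_norm_le_unitary: "unitary_mat n U \<Longrightarrow> op_norm_le U n 1"
  unfolding op_norm_le_def by (simp add: unitary_mat_vec_norm)

lemma op_norm_le_one_mat: "op_norm_le (1\<^sub>m n) n 1"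
  unfolding op_norm_le_def by simp

lemma op_norm_le_zero_mat: "e \<ge> 0 \<Longrightarrow> op_norm_le (0\<^sub>m n n) n e"
proof -
  have "w \<in> carrier_vec n \<Longrightarrow> 0\<^sub>m n n *\<^sub>v w = 0\<^sub>v n" for w :: "complex vec"
    by (intro eq_vecI) auto
  then show "e \<ge> 0 \<Longrightarrow> ?thesis" unfolding op_norm_le_def by (simp add: vec_norm_nonneg)
qed

lemma op_norm_le_mult:
  assumes "A \<in> carrier_mat n n" and "B \<in> carrier_mat n n"
    and "op_norm_le A n a" and "op_norm_le B n b" and "a \<ge> 0"
  shows "op_norm_le (A * B) n (a * b)"
  unfolding op_norm_le_def
proof
  fix w :: "complex vec" assume w: "w \<in> carrier_vec n"
  have "vec_norm ((A * B) *\<^sub>v w) = vec_norm (A *\<^sub>v (B *\<^sub>v w))" using assms w by simp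
  also have "\<dots> \<le> a * vec_norm (B *\<^sub>v w)" using assms w unfolding op_norm_le_def by simp
  also have "\<dots> \<le> a * (b * vec_norm w)" using assms w unfolding op_norm_le_def by (simp add: mult_left_mono)
  finally show "vec_norm ((A * B) *\<^sub>v w) \<le> a * b * vec_norm w" by (simp add: mult.assoc)
qed

lemma op_norm_le_block_diagonal:
  assumes F: "F \<in> carrier_mat (K * n) (K * n)" and e: "e \<ge> 0"
    and A: "\<And>p. p < K \<Longrightarrow> A p \<in> carrier_mat n n \<and> op_norm_le (A p) n e"
    and F_entry: "\<And>p q m m'. p < K \<Longrightarrow> q < K \<Longrightarrow> m < n \<Longrightarrow> m' < n \<Longrightarrow>
       F $$ (p * n + m, q * n + m') = (if p = q then A p $$ (m, m') else 0)"
  shows "op_norm_le F (K * n) e"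
proof (rule op_norm_leI_power2[OF e])
  fix v :: "complex vec" assume v: "v \<in> carrier_vec (K * n)"
  define w where "w p = vec n (\<lambda>m. v $ (p * n + m))" for p
  have w: "w p \<in> carrier_vec n" for p unfolding w_def by simp
  have Fv: "(F *\<^sub>v v) $ (p * n + m) = (A p *\<^sub>v w p) $ m" if p: "p < K" and m: "m < n" for p m
  proof -
    have "(F *\<^sub>v v) $ (p * n + m) = (\<Sum>q<K. \<Sum>m'<n. F $$ (p * n + m, q * n + m') * v $ (q * n + m'))"
      by (simp only: index_mult_mat_vec_sum[OF F v block_index_less[OF p m]] sum_lessThan_mult_split)
    also have "\<dots> = (\<Sum>q<K. if p = q then \<Sum>m'<n. A p $$ (m, m') * w p $ m' else 0)"
      using p m by (intro sum.cong refl) (auto simp: F_entry w_def)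
    also have "\<dots> = (\<Sum>m'<n. A p $$ (m, m') * w p $ m')"
      using p by simp
    also have "\<dots> = (A p *\<^sub>v w p) $ m"
      by (rule index_mult_mat_vec_sum[symmetric, OF conjunct1[OF A[OF p]] w m])
    finally show ?thesis .
  qed
  have "(vec_norm (F *\<^sub>v v))\<^sup>2 = (\<Sum>p<K. \<Sum>m<n. (cmod ((A p *\<^sub>v w p) $ m))\<^sup>2)"
    using F by (simp del: index_mult_mat_vec add: vec_norm_power2 sum_lessThan_mult_split Fv)
  also have "\<dots> = (\<Sum>p<K. (vec_norm (A p *\<^sub>v w p))\<^sup>2)"
    using A by (intro sum.cong refl) (auto simp del: index_mult_mat_vec simp: vec_norm_power2)
  also have "\<dots> \<le> (\<Sum>p<K. e\<^sup>2 * (vec_norm (w p))\<^sup>2)"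
    using A w by (intro sum_mono op_norm_leD_power2) auto
  also have "\<dots> = e\<^sup>2 * (vec_norm v)\<^sup>2"
    using v by (simp add: vec_norm_power2 sum_lessThan_mult_split sum_distrib_left w_def)
  finally show "(vec_norm (F *\<^sub>v v))\<^sup>2 \<le> e\<^sup>2 * (vec_norm v)\<^sup>2" .
qed

lemma op_norm_le_tensor_identity:
  assumes F: "F \<in> carrier_mat (n * R) (n * R)" and e: "e \<ge> 0"
    and A: "A \<in> carrier_mat n n" and "op_norm_le A n e"
    and F_entry: "\<And>p q r r'. p < n \<Longrightarrow> q < n \<Longrightarrow> r < R \<Longrightarrow> r' < R \<Longrightarrow>
       F $$ (p * R + r, q * R + r') = (if r = r' then A $$ (p, q) else 0)"
  shows "op_norm_le F (n * R) e"
proof (rule op_norm_leI_power2[OF e])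
  fix v :: "complex vec" assume v: "v \<in> carrier_vec (n * R)"
  define w where "w r = vec n (\<lambda>p. v $ (p * R + r))" for r
  have w: "w r \<in> carrier_vec n" for r unfolding w_def by simp
  have Fv: "(F *\<^sub>v v) $ (p * R + r) = (A *\<^sub>v w r) $ p" if p: "p < n" and r: "r < R" for p r
  proof -
    have "(F *\<^sub>v v) $ (p * R + r) = (\<Sum>q<n. \<Sum>r'<R. F $$ (p * R + r, q * R + r') * v $ (q * R + r'))"
      by (simp only: index_mult_mat_vec_sum[OF F v block_index_less[OF p r]] sum_lessThan_mult_split)
    also have "\<dots> = (\<Sum>q<n. \<Sum>r'<R. if r = r' then A $$ (p, q) * v $ (q * R + r') else 0)"
      using p r by (intro sum.cong refl) (auto simp: F_entry)
    also have "\<dots> = (\<Sum>q<n. A $$ (p, q) * w r $ q)"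
      using r by (simp add: w_def)
    also have "\<dots> = (A *\<^sub>v w r) $ p"
      using A w p by (simp only: index_mult_mat_vec_sum)
    finally show ?thesis .
  qed
  have "(vec_norm (F *\<^sub>v v))\<^sup>2 = (\<Sum>p<n. \<Sum>r<R. (cmod ((A *\<^sub>v w r) $ p))\<^sup>2)"
    using F by (simp del: index_mult_mat_vec add: vec_norm_power2 sum_lessThan_mult_split Fv)
  also have "\<dots> = (\<Sum>r<R. (vec_norm (A *\<^sub>v w r))\<^sup>2)"
    using A by (simp add: vec_norm_power2 sum.swap[of _ "{..<n}" "{..<R}"])
  also have "\<dots> \<le> (\<Sum>r<R. e\<^sup>2 * (vec_norm (w r))\<^sup>2)"
    using assms(4) w by (intro sum_mono op_norm_leD_power2)
  also have "\<dots> = e\<^sup>2 * (vec_norm v)\<^sup>2"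
    using v by (simp add: vec_norm_power2 sum_lessThan_mult_split sum_distrib_left w_def
        sum.swap[of _ "{..<n}" "{..<R}"])
  finally show "(vec_norm (F *\<^sub>v v))\<^sup>2 \<le> e\<^sup>2 * (vec_norm v)\<^sup>2" .
qed

lemma index_kron:
  "i < dim_row A * dim_row B \<Longrightarrow> j < dim_col A * dim_col B \<Longrightarrow>
   kron A B $$ (i, j) = A $$ (i div dim_row B, j div dim_col B) * B $$ (i mod dim_row B, j mod dim_col B)"
  unfolding kron_def by simp

lemma kron_id_carrier: "Q \<in> carrier_mat n n \<Longrightarrow> kron Q (1\<^sub>m R) \<in> carrier_mat (n * R) (n * R)"
  unfolding kron_def carrier_mat_def by simp

lemma index_kron_id_block:
  assumes Q: "Q \<in> carrier_mat n n" and "p < n" and "q < n" and "r < R" and "r' < R"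
  shows "kron Q (1\<^sub>m R) $$ (p * R + r, q * R + r') = (if r = r' then Q $$ (p, q) else 0)"
  using assms block_index_less[of p n r R] block_index_less[of q n r' R] by (simp add: index_kron)

lemma op_norm_le_kron_id:
  assumes "Q \<in> carrier_mat n n" and "op_norm_le Q n e" and "e \<ge> 0"
  shows "op_norm_le (kron Q (1\<^sub>m R)) (n * R) e"
  by (intro op_norm_le_tensor_identity[OF kron_id_carrier[OF assms(1)] assms(3,1,2)])
    (simp add: index_kron_id_block[OF assms(1)])

lemma op_norm_le_kron_id_diff:
  assumes Q1: "Q1 \<in> carrier_mat n n" and Q2: "Q2 \<in> carrier_mat n n"
    and "op_norm_le (Q1 - Q2) n e" and "e \<ge> 0"
  shows "op_norm_le (kron Q1 (1\<^sub>m R) - kron Q2 (1\<^sub>m R)) (n * R) e"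
proof (rule op_norm_le_tensor_identity[where A = "Q1 - Q2"])
  fix p q r r' :: nat assume "p < n" "q < n" "r < R" "r' < R"
  then show "(kron Q1 (1\<^sub>m R) - kron Q2 (1\<^sub>m R)) $$ (p * R + r, q * R + r') =
      (if r = r' then (Q1 - Q2) $$ (p, q) else 0)"
    using Q1 Q2 kron_id_carrier[OF Q2, of R] block_index_less[of p n r R] block_index_less[of q n r' R]
    by (simp add: index_kron_id_block[OF Q1] index_kron_id_block[OF Q2])
qed (use assms minus_carrier_mat[OF kron_id_carrier[OF Q2]] in auto)

definition query_block :: "nat \<Rightarrow> complex mat \<Rightarrow> qkind \<Rightarrow> nat \<Rightarrow> complex mat" where
  "query_block M U k p = (case k of
      QU \<Rightarrow> U
    | QUadj \<Rightarrow> mat_adjoint U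
    | QCU \<Rightarrow> (if p = 0 then 1\<^sub>m M else U)
    | QCUadj \<Rightarrow> (if p = 0 then 1\<^sub>m M else mat_adjoint U))"

lemma query_op_carrier: "U \<in> carrier_mat M M \<Longrightarrow> query_op M U k \<in> carrier_mat (2 * M) (2 * M)"
  unfolding query_op_def kron_def carrier_mat_def by (cases k) auto

lemma query_block_carrier: "U \<in> carrier_mat M M \<Longrightarrow> query_block M U k p \<in> carrier_mat M M"
  unfolding query_block_def by (cases k) auto

lemma index_query_op_block:
  assumes U: "U \<in> carrier_mat M M" and "p < 2" and "q < 2" and "m < M" and "m' < M"
  shows "query_op M U k $$ (p * M + m, q * M + m') = (if p = q then query_block M U k p $$ (m, m') else 0)"
proof -
  have "dim_row U = M" "dim_col U = M" using U by auto
  moreover have "p * M + m < 2 * M" "q * M + m' < 2 * M"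
    using assms block_index_less by auto
  ultimately show ?thesis
    unfolding query_op_def query_block_def using assms(2-)
    by (cases k; cases p; cases q) (simp_all add: index_kron)
qed

lemma op_norm_le_query_op:
  assumes U: "unitary_mat M U"
  shows "op_norm_le (query_op M U k) (2 * M) 1"
proof -
  have UC: "U \<in> carrier_mat M M" using U unfolding unitary_mat_def by simp
  show ?thesis
  proof (rule op_norm_le_block_diagonal[where A = "query_block M U k"])
    fix p :: nat
    show "query_block M U k p \<in> carrier_mat M M \<and> op_norm_le (query_block M U k p) M 1"
      using UC op_norm_le_one_mat op_norm_le_unitary[OF U] op_norm_le_unitary[OF unitary_mat_adjoint[OF U]]
      unfolding query_block_def by (cases k) auto
  qed (auto simp: query_op_carrier[OF UC] index_query_op_block[OF UC])
qed

lemma op_norm_le_query_op_diff: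
  assumes U1: "U1 \<in> carrier_mat M M" and U2: "U2 \<in> carrier_mat M M" and d: "d \<ge> 0"
    and "op_norm_le (U1 - U2) M d" and "op_norm_le (mat_adjoint U1 - mat_adjoint U2) M d"
  shows "op_norm_le (query_op M U1 k - query_op M U2 k) (2 * M) d"
proof (rule op_norm_le_block_diagonal[where A = "\<lambda>p. query_block M U1 k p - query_block M U2 k p"])
  have "1\<^sub>m M - 1\<^sub>m M = (0\<^sub>m M M :: complex mat)" by simp
  then show "query_block M U1 k p - query_block M U2 k p \<in> carrier_mat M M \<and>
      op_norm_le (query_block M U1 k p - query_block M U2 k p) M d" for p
    using assms op_norm_le_zero_mat[OF d] query_block_carrier[OF U2]
    unfolding query_block_def by (cases k) (auto simp del: minus_r_inv_mat)
next
  fix p q m m' :: nat assume "p < 2" "q < 2" "m < M" "m' < M"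
  then show "(query_op M U1 k - query_op M U2 k) $$ (p * M + m, q * M + m') =
      (if p = q then (query_block M U1 k p - query_block M U2 k p) $$ (m, m') else 0)"
    using query_op_carrier[OF U2, of k] query_block_carrier[OF U2, of k q]
      block_index_less[of p 2 m M] block_index_less[of q 2 m' M]
    by (simp add: index_query_op_block[OF U1] index_query_op_block[OF U2])
qed (use assms minus_carrier_mat[OF query_op_carrier[OF U2]] in auto)

section \<open>The hybrid argument\<close>

definition query_circuit :: "(qkind \<Rightarrow> complex mat) \<Rightarrow> complex mat \<Rightarrow> (qkind \<times> complex mat) list \<Rightarrow> complex mat" where
  "query_circuit Q V0 steps = foldl (\<lambda>W (k, V). V * Q k * W) V0 steps"

lemma query_circuit_Nil [simp]: "query_circuit Q V0 [] = V0"
  unfolding query_circuit_def by simp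

lemma query_circuit_snoc [simp]: "query_circuit Q V0 (steps @ [(k, V)]) = V * Q k * query_circuit Q V0 steps"
  unfolding query_circuit_def by simp

lemma alg_unitary_eq_query_circuit:
  "alg_unitary M R V0 steps U = query_circuit (\<lambda>k. kron (query_op M U k) (1\<^sub>m R)) V0 steps"
  unfolding alg_unitary_def query_circuit_def ..

lemma query_circuit_contraction:
  assumes V0: "V0 \<in> carrier_mat D D" "op_norm_le V0 D 1"
    and Q: "\<And>k. Q k \<in> carrier_mat D D \<and> op_norm_le (Q k) D 1"
    and steps: "\<And>k V. (k, V) \<in> set steps \<Longrightarrow> V \<in> carrier_mat D D \<and> op_norm_le V D 1"
  shows "query_circuit Q V0 steps \<in> carrier_mat D D \<and> op_norm_le (query_circuit Q V0 steps) D 1"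
  using steps
proof (induction steps rule: rev_induct)
  case (snoc st steps)
  obtain k V where st: "st = (k, V)" by (cases st)
  with snoc.prems have V: "V \<in> carrier_mat D D" "op_norm_le V D 1" by auto
  from snoc have C: "query_circuit Q V0 steps \<in> carrier_mat D D" "op_norm_le (query_circuit Q V0 steps) D 1"
    by auto
  have "op_norm_le (V * Q k * query_circuit Q V0 steps) D (1 * 1 * 1)"
    using V Q[of k] C by (intro op_norm_le_mult) auto
  then show ?case using st V Q[of k] C by (auto intro: mult_carrier_mat)
qed (use V0 in simp)

text \<open>One step of the hybrid argument: \<open>VAX - VBY = V (A (X - Y) + (A - B) Y)\<close>.\<close>
lemma op_norm_le_hybrid_step:
  assumes V: "V \<in> carrier_mat D D" "op_norm_le V D 1"
    and A: "A \<in> carrier_mat D D" "op_norm_le A D 1" and B: "B \<in> carrier_mat D D"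
    and AB: "op_norm_le (A - B) D d" and "d \<ge> 0"
    and X: "X \<in> carrier_mat D D" and Y: "Y \<in> carrier_mat D D" "op_norm_le Y D 1"
    and XY: "op_norm_le (X - Y) D e"
  shows "op_norm_le (V * A * X - V * B * Y) D (e + d)"
  unfolding op_norm_le_def
proof
  fix w :: "complex vec" assume w: "w \<in> carrier_vec D"
  define x where "x = X *\<^sub>v w"
  define y where "y = Y *\<^sub>v w"
  have x: "x \<in> carrier_vec D" and y: "y \<in> carrier_vec D" using X Y w unfolding x_def y_def by auto
  have AB_carrier: "A - B \<in> carrier_mat D D" using B by (rule minus_carrier_mat)
  define u where "u = A *\<^sub>v (x - y) + (A - B) *\<^sub>v y"
  have u: "u \<in> carrier_vec D" using A AB_carrier x y unfolding u_def by simp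
  have "(V * A * X - V * B * Y) *\<^sub>v w = (V * A * X) *\<^sub>v w - (V * B * Y) *\<^sub>v w"
    using V A B X Y w by (intro minus_mult_distrib_mat_vec[of _ D D]) auto
  also have "\<dots> = V *\<^sub>v (A *\<^sub>v x) - V *\<^sub>v (B *\<^sub>v y)"
    using V A B X Y w unfolding x_def y_def by (simp add: assoc_mult_mat_vec[of _ D D _ D])
  also have "\<dots> = V *\<^sub>v (A *\<^sub>v x - B *\<^sub>v y)"
    using V A B x y by (simp add: mult_minus_distrib_mat_vec[of _ D D])
  also have "A *\<^sub>v x - B *\<^sub>v y = u"
    unfolding u_def using A B x y
    by (intro eq_vecI) (auto simp: mult_minus_distrib_mat_vec minus_mult_distrib_mat_vec)
  finally have "vec_norm ((V * A * X - V * B * Y) *\<^sub>v w) \<le> vec_norm u"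
    using V u unfolding op_norm_le_def by simp
  also have "\<dots> \<le> vec_norm (A *\<^sub>v (x - y)) + vec_norm ((A - B) *\<^sub>v y)"
    unfolding u_def using A AB_carrier x y by (intro vec_norm_add_le[of _ D]) auto
  also have "\<dots> \<le> vec_norm (x - y) + d * vec_norm y"
    using A AB x y unfolding op_norm_le_def by (intro add_mono) auto
  also have "\<dots> \<le> e * vec_norm w + d * vec_norm w"
    using XY X Y w \<open>d \<ge> 0\<close> unfolding x_def y_def op_norm_le_def
    by (intro add_mono mult_left_mono) (auto simp: minus_mult_distrib_mat_vec[of _ D D])
  finally show "vec_norm ((V * A * X - V * B * Y) *\<^sub>v w) \<le> (e + d) * vec_norm w"
    by (simp add: algebra_simps)
qed

lemma op_norm_le_query_circuit_diff:
  assumes V0: "V0 \<in> carrier_mat D D" "op_norm_le V0 D 1" and d: "d \<ge> 0"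
    and QA: "\<And>k. QA k \<in> carrier_mat D D \<and> op_norm_le (QA k) D 1"
    and QB: "\<And>k. QB k \<in> carrier_mat D D \<and> op_norm_le (QB k) D 1"
    and QA_QB: "\<And>k. op_norm_le (QA k - QB k) D d"
    and steps: "\<And>k V. (k, V) \<in> set steps \<Longrightarrow> V \<in> carrier_mat D D \<and> op_norm_le V D 1"
  shows "op_norm_le (query_circuit QA V0 steps - query_circuit QB V0 steps) D (real (length steps) * d)"
  using steps
proof (induction steps rule: rev_induct)
  case Nil
  have "V0 - V0 = 0\<^sub>m D D" using V0 by simp
  then show ?case using op_norm_le_zero_mat[of 0 D] by simp
next
  case (snoc st steps)
  obtain k V where st: "st = (k, V)" by (cases st)
  with snoc.prems have V: "V \<in> carrier_mat D D" "op_norm_le V D 1" by auto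
  have "query_circuit QA V0 steps \<in> carrier_mat D D"
    and "query_circuit QB V0 steps \<in> carrier_mat D D \<and> op_norm_le (query_circuit QB V0 steps) D 1"
    using query_circuit_contraction[of V0 D QA steps] query_circuit_contraction[of V0 D QB steps]
      V0 QA QB snoc.prems by auto
  moreover have "op_norm_le (query_circuit QA V0 steps - query_circuit QB V0 steps) D (real (length steps) * d)"
    using snoc by auto
  ultimately have "op_norm_le (V * QA k * query_circuit QA V0 steps - V * QB k * query_circuit QB V0 steps) D
      (real (length steps) * d + d)"
    using V QA[of k] QB[of k] QA_QB[of k] d by (intro op_norm_le_hybrid_step) auto
  then show ?case unfolding st by (simp add: algebra_simps)
qed

lemma valid_alg_contractions:
  assumes "valid_alg N M R S V0 steps"
  shows "V0 \<in> carrier_mat (2 * M * R) (2 * M * R)" and "op_norm_le V0 (2 * M * R) 1"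
    and "(k, V) \<in> set steps \<Longrightarrow> V \<in> carrier_mat (2 * M * R) (2 * M * R) \<and> op_norm_le V (2 * M * R) 1"
  using assms op_norm_le_unitary unfolding valid_alg_def unitary_mat_def by fastforce+

lemma kron_query_op_contraction:
  assumes "unitary_mat M U"
  shows "kron (query_op M U k) (1\<^sub>m R) \<in> carrier_mat (2 * M * R) (2 * M * R) \<and>
    op_norm_le (kron (query_op M U k) (1\<^sub>m R)) (2 * M * R) 1"
proof -
  have "U \<in> carrier_mat M M" using assms unfolding unitary_mat_def by simp
  then show ?thesis
    using kron_id_carrier[OF query_op_carrier] op_norm_le_kron_id[OF query_op_carrier op_norm_le_query_op[OF assms]]
    by auto
qed

lemma alg_unitary_contraction:
  assumes "valid_alg N M R S V0 steps" and "unitary_mat M U"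
  shows "alg_unitary M R V0 steps U \<in> carrier_mat (2 * M * R) (2 * M * R) \<and>
    op_norm_le (alg_unitary M R V0 steps U) (2 * M * R) 1"
  unfolding alg_unitary_eq_query_circuit
  using valid_alg_contractions[OF assms(1)] kron_query_op_contraction[OF assms(2)]
  by (intro query_circuit_contraction) auto

lemma op_norm_le_alg_unitary_diff:
  assumes alg: "valid_alg N M R S V0 steps"
    and U1: "unitary_mat M U1" and U2: "unitary_mat M U2" and "d \<ge> 0"
    and "op_norm_le (U1 - U2) M d" and "op_norm_le (mat_adjoint U1 - mat_adjoint U2) M d"
  shows "op_norm_le (alg_unitary M R V0 steps U1 - alg_unitary M R V0 steps U2) (2 * M * R)
    (real (length steps) * d)"
proof -
  have "U1 \<in> carrier_mat M M" "U2 \<in> carrier_mat M M" using U1 U2 unfolding unitary_mat_def by auto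
  then have "op_norm_le (kron (query_op M U1 k) (1\<^sub>m R) - kron (query_op M U2 k) (1\<^sub>m R)) (2 * M * R) d" for k
    using assms by (intro op_norm_le_kron_id_diff query_op_carrier op_norm_le_query_op_diff)
  then show ?thesis
    unfolding alg_unitary_eq_query_circuit
    using valid_alg_contractions[OF alg] kron_query_op_contraction[OF U1] kron_query_op_contraction[OF U2]
      \<open>d \<ge> 0\<close>
    by (intro op_norm_le_query_circuit_diff) auto
qed

lemma partial_trace_2_index_0_0:
  "0 < N \<Longrightarrow> partial_trace_2 N S \<psi> $$ (0, 0) = (\<Sum>s<S. \<psi> $ s * cnj (\<psi> $ s))"
  unfolding partial_trace_2_def by simp

lemma L2_set_diff_abs_le:
  assumes "\<And>i. i \<in> A \<Longrightarrow> 0 \<le> f i" and "\<And>i. i \<in> A \<Longrightarrow> 0 \<le> g i"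
  shows "\<bar>L2_set f A - L2_set g A\<bar> \<le> L2_set (\<lambda>i. \<bar>f i - g i\<bar>) A"
proof -
  have "L2_set f A \<le> L2_set (\<lambda>i. \<bar>f i - g i\<bar> + g i) A" using assms by (intro L2_set_mono) auto
  also have "\<dots> \<le> L2_set (\<lambda>i. \<bar>f i - g i\<bar>) A + L2_set g A" by (rule L2_set_triangle_ineq)
  finally have fg: "L2_set f A \<le> L2_set (\<lambda>i. \<bar>f i - g i\<bar>) A + L2_set g A" .
  have "L2_set g A \<le> L2_set (\<lambda>i. \<bar>f i - g i\<bar> + f i) A" using assms by (intro L2_set_mono) auto
  also have "\<dots> \<le> L2_set (\<lambda>i. \<bar>f i - g i\<bar>) A + L2_set f A" by (rule L2_set_triangle_ineq)
  finally show ?thesis using fg by linarith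
qed

text \<open>The probability of outcome \<open>0\<close> on the first factor is the squared norm of the first
  \<open>S\<close> amplitudes; by the reverse triangle inequality and \<open>a\<^sup>2 - b\<^sup>2 = (a - b)(a + b)\<close> it is
  \<open>2\<close>-Lipschitz on the unit ball.\<close>
lemma prefix_norm_power2_diff_le:
  assumes \<psi>1: "\<psi>1 \<in> carrier_vec D" and \<psi>2: "\<psi>2 \<in> carrier_vec D" and "S \<le> D"
    and "vec_norm \<psi>1 \<le> 1" and "vec_norm \<psi>2 \<le> 1"
  shows "cmod ((\<Sum>s<S. \<psi>1 $ s * cnj (\<psi>1 $ s)) - (\<Sum>s<S. \<psi>2 $ s * cnj (\<psi>2 $ s))) \<le> 2 * vec_norm (\<psi>1 - \<psi>2)"
proof -
  define P where "P = L2_set (\<lambda>i. cmod (\<psi>1 $ i)) {..<S}"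
  define Q where "Q = L2_set (\<lambda>i. cmod (\<psi>2 $ i)) {..<S}"
  have prefix_le: "L2_set f {..<S} \<le> L2_set f {..<D}" for f :: "nat \<Rightarrow> real"
    unfolding L2_set_def using \<open>S \<le> D\<close> by (intro real_sqrt_le_mono sum_mono2) auto
  have "\<bar>P - Q\<bar> \<le> L2_set (\<lambda>i. \<bar>cmod (\<psi>1 $ i) - cmod (\<psi>2 $ i)\<bar>) {..<S}"
    unfolding P_def Q_def by (rule L2_set_diff_abs_le) auto
  also have "\<dots> \<le> L2_set (\<lambda>i. cmod ((\<psi>1 - \<psi>2) $ i)) {..<S}"
    using \<psi>1 \<psi>2 \<open>S \<le> D\<close> by (intro L2_set_mono) (auto simp: norm_triangle_ineq3)
  also have "\<dots> \<le> vec_norm (\<psi>1 - \<psi>2)" unfolding vec_norm_def using \<psi>2 by (simp add: prefix_le)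
  finally have PQ: "\<bar>P - Q\<bar> \<le> vec_norm (\<psi>1 - \<psi>2)" .
  have "P \<le> 1" "Q \<le> 1"
    using prefix_le[of "\<lambda>i. cmod (\<psi>1 $ i)"] prefix_le[of "\<lambda>i. cmod (\<psi>2 $ i)"] assms
    unfolding P_def Q_def vec_norm_def by auto
  moreover have "P \<ge> 0" "Q \<ge> 0" unfolding P_def Q_def by simp_all
  ultimately have bound: "\<bar>P - Q\<bar> * (P + Q) \<le> 2 * vec_norm (\<psi>1 - \<psi>2)"
    using PQ by (subst mult.commute, intro mult_mono) auto
  have "(\<Sum>s<S. \<psi>1 $ s * cnj (\<psi>1 $ s)) = complex_of_real (P\<^sup>2)"
    and "(\<Sum>s<S. \<psi>2 $ s * cnj (\<psi>2 $ s)) = complex_of_real (Q\<^sup>2)"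
    unfolding P_def Q_def L2_set_def of_real_sum using complex_norm_square by (simp_all add: sum_nonneg)
  then have "cmod ((\<Sum>s<S. \<psi>1 $ s * cnj (\<psi>1 $ s)) - (\<Sum>s<S. \<psi>2 $ s * cnj (\<psi>2 $ s))) = \<bar>P\<^sup>2 - Q\<^sup>2\<bar>"
    by (simp only: of_real_diff[symmetric] norm_of_real)
  also have "P\<^sup>2 - Q\<^sup>2 = (P - Q) * (P + Q)" by (simp add: power2_eq_square algebra_simps)
  also have "\<bar>(P - Q) * (P + Q)\<bar> = \<bar>P - Q\<bar> * (P + Q)" using \<open>P \<ge> 0\<close> \<open>Q \<ge> 0\<close> by (simp add: abs_mult)
  finally show ?thesis using bound by simp
qed

lemma alg_output_index_0_0_diff_le:
  assumes alg: "valid_alg N M R S V0 steps" and "0 < N"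
    and U1: "unitary_mat M U1" and U2: "unitary_mat M U2" and d: "d \<ge> 0"
    and "op_norm_le (U1 - U2) M d" and "op_norm_le (mat_adjoint U1 - mat_adjoint U2) M d"
  shows "cmod (alg_output N M R S V0 steps U1 $$ (0, 0) - alg_output N M R S V0 steps U2 $$ (0, 0))
    \<le> 2 * real (length steps) * d"
proof -
  define D where "D = 2 * M * R"
  define \<psi>1 where "\<psi>1 = alg_unitary M R V0 steps U1 *\<^sub>v unit_vec D 0"
  define \<psi>2 where "\<psi>2 = alg_unitary M R V0 steps U2 *\<^sub>v unit_vec D 0"
  have C1: "alg_unitary M R V0 steps U1 \<in> carrier_mat D D" "op_norm_le (alg_unitary M R V0 steps U1) D 1"
    and C2: "alg_unitary M R V0 steps U2 \<in> carrier_mat D D" "op_norm_le (alg_unitary M R V0 steps U2) D 1"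
    using alg_unitary_contraction[OF alg U1] alg_unitary_contraction[OF alg U2] unfolding D_def by auto
  have e0: "unit_vec D 0 \<in> carrier_vec D" "vec_norm (unit_vec D 0) \<le> 1"
    using vec_norm_unit_vec by auto
  have "\<psi>1 \<in> carrier_vec D" "\<psi>2 \<in> carrier_vec D" "vec_norm \<psi>1 \<le> 1" "vec_norm \<psi>2 \<le> 1"
    using C1 C2 e0 unfolding op_norm_le_def \<psi>1_def \<psi>2_def by (auto intro: order_trans)
  moreover have "vec_norm (\<psi>1 - \<psi>2) \<le> real (length steps) * d * vec_norm (unit_vec D 0)"
    using op_norm_le_alg_unitary_diff[OF alg U1 U2 assms(5-), folded D_def] C1 C2 e0
    unfolding op_norm_le_def \<psi>1_def \<psi>2_def by (auto simp: minus_mult_distrib_mat_vec[of _ D D])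
  then have "vec_norm (\<psi>1 - \<psi>2) \<le> real (length steps) * d"
    using e0 d mult_left_le[of "vec_norm (unit_vec D 0)" "real (length steps) * d"] by simp
  moreover have "S \<le> D" using alg \<open>0 < N\<close> unfolding valid_alg_def D_def by (cases N) auto
  ultimately have "cmod ((\<Sum>s<S. \<psi>1 $ s * cnj (\<psi>1 $ s)) - (\<Sum>s<S. \<psi>2 $ s * cnj (\<psi>2 $ s)))
      \<le> 2 * (real (length steps) * d)"
    using prefix_norm_power2_diff_le[of \<psi>1 D \<psi>2 S] by simp
  then show ?thesis
    unfolding alg_output_def partial_trace_2_index_0_0[OF \<open>0 < N\<close>] D_def[symmetric]
      \<psi>1_def[symmetric] \<psi>2_def[symmetric]
    by (simp add: mult.assoc)
qed

section \<open>Functional calculus and the trace norm\<close>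

lemma mat_fun_spectral_dec:
  assumes "\<exists>V d. spectral_dec (dim_row A) A V d"
  shows "\<exists>V d. spectral_dec (dim_row A) A V d \<and>
     (\<forall>f. mat_fun f A = V * mat_diag (dim_row A) (\<lambda>i. complex_of_real (f (d i))) * mat_adjoint V)"
proof -
  let ?P = "\<lambda>x. spectral_dec (dim_row A) A (fst x) (snd x)"
  define x where "x = (SOME x. ?P x)"
  have P: "?P x" unfolding x_def by (rule someI_ex) (use assms in auto)
  have eq: "(SOME (V, d). spectral_dec (dim_row A) A V d) = x"
    unfolding x_def by (simp add: case_prod_beta')
  show ?thesis
    by (rule exI[of _ "fst x"], rule exI[of _ "snd x"])
      (use P in \<open>simp add: mat_fun_def Let_def eq split: prod.splits\<close>)
qed

lemma index_adjoint_mult_self_diag: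
  assumes X: "(X :: complex mat) \<in> carrier_mat n n" and "k < n"
  shows "(mat_adjoint X * X) $$ (k, k) = complex_of_real (\<Sum>i<n. (cmod (X $$ (i, k)))\<^sup>2)"
  unfolding index_mult_mat_sum[OF mat_adjoint_carrier[OF X] X assms(2,2)] of_real_sum
proof (rule sum.cong[OF refl])
  fix i assume "i \<in> {..<n}"
  then have "mat_adjoint X $$ (k, i) * X $$ (i, k) = X $$ (i, k) * cnj (X $$ (i, k))" using assms by simp
  then show "mat_adjoint X $$ (k, i) * X $$ (i, k) = complex_of_real ((cmod (X $$ (i, k)))\<^sup>2)"
    by (simp only: complex_norm_square)
qed

lemma spectral_dec_adjoint_mult_self_eigenvalue:
  assumes X: "X \<in> carrier_mat n n" and dec: "spectral_dec n (mat_adjoint X * X) V d" and k: "k < n"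
  shows "d k = (\<Sum>i<n. (cmod ((X * V) $$ (i, k)))\<^sup>2)"
proof -
  define D where "D = mat_diag n (\<lambda>i. complex_of_real (d i))"
  have V: "V \<in> carrier_mat n n" and VV: "mat_adjoint V * V = 1\<^sub>m n"
    and XX: "mat_adjoint X * X = V * D * mat_adjoint V"
    using dec unfolding spectral_dec_def unitary_mat_def D_def by auto
  have D: "D \<in> carrier_mat n n" and Va: "mat_adjoint V \<in> carrier_mat n n" and Xa: "mat_adjoint X \<in> carrier_mat n n"
    using V X unfolding D_def by auto
  have "mat_adjoint (X * V) * (X * V) = mat_adjoint V * (mat_adjoint X * X) * V"
    unfolding mat_adjoint_mult[OF X V] using X V Xa Va mult_carrier_mat[OF Xa X]
    by (simp add: assoc_mult_mat[of _ n n _ n _ n])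
  also have "\<dots> = (mat_adjoint V * V) * D * (mat_adjoint V * V)"
    unfolding XX using V D Va mult_carrier_mat[OF V D] mult_carrier_mat[OF Va V]
    by (simp add: assoc_mult_mat[of _ n n _ n _ n])
  also have "\<dots> = D" using D by (simp add: VV)
  finally have YY: "mat_adjoint (X * V) * (X * V) = D" .
  have "complex_of_real (d k) = D $$ (k, k)" unfolding D_def using k by simp
  also have "\<dots> = complex_of_real (\<Sum>i<n. (cmod ((X * V) $$ (i, k)))\<^sup>2)"
    unfolding YY[symmetric] using X V k by (intro index_adjoint_mult_self_diag) auto
  finally show ?thesis by (simp only: of_real_eq_iff)
qed

text \<open>The proof is \<open>|X\<^sub>i\<^sub>j| \<le> \<parallel>X\<parallel>\<^sub>F \<le> \<parallel>X\<parallel>\<^sub>1\<close>. The existence hypothesis cannot be dropped: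
  \<open>mat_fun\<close> evaluates a \<open>SOME\<close>-chosen spectral decomposition, so \<open>trace_norm X\<close> is
  unconstrained when \<open>X\<^sup>\<dagger>X\<close> has none.\<close>
lemma norm_index_le_trace_norm:
  assumes X: "X \<in> carrier_mat n n" and "\<exists>V d. spectral_dec n (mat_adjoint X * X) V d"
    and i: "i < n" and j: "j < n"
  shows "cmod (X $$ (i, j)) \<le> trace_norm X"
proof -
  define B where "B = mat_adjoint X * X"
  have B: "B \<in> carrier_mat n n" unfolding B_def using X by (simp add: mult_carrier_mat[of _ n n])
  then have "dim_row B = n" by simp
  then obtain V d where dec: "spectral_dec n B V d"
    and mf: "\<And>f. mat_fun f B = V * mat_diag n (\<lambda>i. complex_of_real (f (d i))) * mat_adjoint V"
    using mat_fun_spectral_dec[of B] assms(2) unfolding B_def by auto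
  have U: "unitary_mat n V" and B_dec: "B = V * mat_diag n (\<lambda>i. complex_of_real (d i)) * mat_adjoint V"
    using dec unfolding spectral_dec_def by auto
  have d: "d k \<ge> 0" if "k < n" for k
    using spectral_dec_adjoint_mult_self_eigenvalue[OF X dec[unfolded B_def] that] by (simp add: sum_nonneg)
  have "(cmod (X $$ (i, j)))\<^sup>2 \<le> (\<Sum>i<n. (cmod (X $$ (i, j)))\<^sup>2)"
    using i by (intro member_le_sum) auto
  also have "\<dots> \<le> (\<Sum>k<n. \<Sum>i<n. (cmod (X $$ (i, k)))\<^sup>2)"
    using j by (intro member_le_sum[where f = "\<lambda>k. \<Sum>i<n. (cmod (X $$ (i, k)))\<^sup>2"]) (auto intro: sum_nonneg)
  also have "\<dots> = Re (\<Sum>k<n. B $$ (k, k))"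
    unfolding B_def by (simp del: index_mult_mat add: index_adjoint_mult_self_diag[OF X])
  also have "\<dots> = Re (mat_trace B)" unfolding mat_trace_def using \<open>dim_row B = n\<close> by simp
  also have "\<dots> = (\<Sum>k<n. d k)"
    unfolding B_dec mat_trace_unitary_conj_diag[OF U] by simp
  finally have "cmod (X $$ (i, j)) \<le> L2_set (\<lambda>k. sqrt (d k)) {..<n}"
    unfolding L2_set_def using d by (simp add: real_le_rsqrt)
  also have "\<dots> \<le> (\<Sum>k<n. sqrt (d k))" by (rule L2_set_le_sum) (simp add: d)
  also have "\<dots> = trace_norm X"
    unfolding trace_norm_def mat_sqrt_def B_def[symmetric] mf mat_trace_unitary_conj_diag[OF U] by simp
  finally show ?thesis .
qed

text \<open>Eigen-decomposition of the real symmetric matrix \<open>[[p, r], [r, q]]\<close>: eigenvalues \<open>l\<^sub>1, l\<^sub>2\<close>,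
  with unit eigenvector \<open>(\<surd>\<alpha>, \<surd>\<beta>)\<close> for \<open>l\<^sub>1\<close>.\<close>
lemma real_symmetric_2x2_eigen:
  fixes p q r :: real
  assumes "r \<ge> 0"
  shows "\<exists>\<alpha> \<beta> l1 l2. \<alpha> \<ge> 0 \<and> \<beta> \<ge> 0 \<and> \<alpha> + \<beta> = 1 \<and> p = l1 * \<alpha> + l2 * \<beta> \<and> q = l1 * \<beta> + l2 * \<alpha> \<and>
     r = (l1 - l2) * sqrt (\<alpha> * \<beta>)"
proof -
  define h where "h = (p - q) / 2"
  define t where "t = sqrt (h\<^sup>2 + r\<^sup>2)"
  have tt: "t\<^sup>2 = h\<^sup>2 + r\<^sup>2" unfolding t_def by simp
  have ht: "\<bar>h\<bar> \<le> t" unfolding t_def by (rule real_sqrt_ge_abs1[THEN order_trans[rotated]]) simp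
  show ?thesis
  proof (cases "t = 0")
    case True
    then have "p = q" "r = 0" using tt unfolding h_def by (auto simp: add_nonneg_eq_0_iff)
    then show ?thesis by (intro exI[of _ 1] exI[of _ 0] exI[of _ p] exI[of _ q]) simp
  next
    case False
    moreover have "t \<ge> 0" unfolding t_def by simp
    ultimately have t: "t > 0" by simp
    define \<alpha> where "\<alpha> = (t + h) / (2 * t)"
    define \<beta> where "\<beta> = (t - h) / (2 * t)"
    have "\<alpha> * \<beta> = (r / (2 * t))\<^sup>2" unfolding \<alpha>_def \<beta>_def using t tt
      by (simp add: field_simps power2_eq_square)
    then have "sqrt (\<alpha> * \<beta>) = r / (2 * t)" using assms t by simp
    moreover have "\<alpha> \<ge> 0" "\<beta> \<ge> 0" unfolding \<alpha>_def \<beta>_def using t ht by (simp_all add: abs_le_iff)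
    moreover have "\<alpha> + \<beta> = 1" unfolding \<alpha>_def \<beta>_def using t by (simp add: field_simps)
    moreover have "p = ((p + q) / 2 + t) * \<alpha> + ((p + q) / 2 - t) * \<beta>"
      and "q = ((p + q) / 2 + t) * \<beta> + ((p + q) / 2 - t) * \<alpha>"
      unfolding \<alpha>_def \<beta>_def h_def using t by (simp_all add: field_simps)
    ultimately show ?thesis using t
      by (intro exI[of _ \<alpha>] exI[of _ \<beta>] exI[of _ "(p + q) / 2 + t"] exI[of _ "(p + q) / 2 - t"]) simp
  qed
qed

lemma spectral_dec_2x2:
  fixes a b l1 l2 :: real and \<phi> :: complex
  assumes B: "B \<in> carrier_mat 2 2" and ab: "a\<^sup>2 + b\<^sup>2 = 1" and \<phi>: "\<phi> * cnj \<phi> = 1"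
    and B00: "B $$ (0, 0) = complex_of_real (l1 * a\<^sup>2 + l2 * b\<^sup>2)"
    and B11: "B $$ (1, 1) = complex_of_real (l1 * b\<^sup>2 + l2 * a\<^sup>2)"
    and B01: "B $$ (0, 1) = \<phi> * complex_of_real ((l1 - l2) * a * b)"
    and B10: "B $$ (1, 0) = cnj \<phi> * complex_of_real ((l1 - l2) * a * b)"
  shows "spectral_dec 2 B
    (mat 2 2 (\<lambda>(i, j). if i = 0 then \<phi> * (if j = 0 then a else b) else if j = 0 then b else - a))
    (\<lambda>i. if i = 0 then l1 else l2)"
proof -
  define V where "V = mat 2 2 (\<lambda>(i, j). if i = 0 then \<phi> * (if j = 0 then a else b) else if j = 0 then b else - a)"
  define D where "D = mat_diag 2 (\<lambda>i. complex_of_real (if i = 0 then l1 else l2))"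
  have V: "V \<in> carrier_mat 2 2" and Va: "mat_adjoint V \<in> carrier_mat 2 2" unfolding V_def by auto
  have VD: "V * D \<in> carrier_mat 2 2" unfolding D_def by (rule mult_carrier_mat[OF V mat_diag_dim])
  have ab': "complex_of_real a * complex_of_real a + complex_of_real b * complex_of_real b = 1"
    using arg_cong[OF ab, of complex_of_real] by (simp add: power2_eq_square)
  have \<phi>': "\<phi> * (cnj \<phi> * x) = x" for x using \<phi> by (simp add: mult.assoc[symmetric])
  have V_entries: "V $$ (0, 0) = \<phi> * a" "V $$ (0, Suc 0) = \<phi> * b" "V $$ (Suc 0, 0) = b" "V $$ (Suc 0, Suc 0) = - a"
    and Va_entries: "mat_adjoint V $$ (0, 0) = cnj \<phi> * a" "mat_adjoint V $$ (0, Suc 0) = b"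
      "mat_adjoint V $$ (Suc 0, 0) = cnj \<phi> * b" "mat_adjoint V $$ (Suc 0, Suc 0) = - a"
    unfolding V_def by simp_all
  have VD_entries: "(V * D) $$ (0, 0) = \<phi> * a * l1" "(V * D) $$ (0, Suc 0) = \<phi> * b * l2"
    "(V * D) $$ (Suc 0, 0) = b * l1" "(V * D) $$ (Suc 0, Suc 0) = - a * l2"
    unfolding D_def mat_diag_mult_right[OF V] by (simp_all add: V_def)
  have "V * mat_adjoint V = 1\<^sub>m 2" and "mat_adjoint V * V = 1\<^sub>m 2"
    using V Va \<phi> ab' by (auto intro!: mat_mult_2x2_eqI simp: V_entries Va_entries algebra_simps \<phi>')
  moreover have "V * D * mat_adjoint V = B"
    using VD Va B \<phi> ab'
    by (intro mat_mult_2x2_eqI)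
      (simp_all add: VD_entries Va_entries B00 B01[unfolded One_nat_def] B10[unfolded One_nat_def]
        B11[unfolded One_nat_def] power2_eq_square algebra_simps \<phi>')
  ultimately show ?thesis
    unfolding spectral_dec_def unitary_mat_def V_def[symmetric] D_def[symmetric] using V by simp
qed

lemma hermitian_mat_2_spectral_dec:
  assumes "hermitian_mat 2 B"
  shows "\<exists>V d. spectral_dec 2 B V d"
proof -
  have B: "B \<in> carrier_mat 2 2" and "mat_adjoint B = B" using assms unfolding hermitian_mat_def by auto
  then have herm: "cnj (B $$ (j, i)) = B $$ (i, j)" if "i < 2" "j < 2" for i j
    using that index_mat_adjoint[of i B j] by simp
  define z where "z = B $$ (0, 1)"
  define r where "r = cmod z"
  define \<phi> where "\<phi> = (if z = 0 then 1 else z / complex_of_real r)"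
  have z: "z = \<phi> * complex_of_real r" unfolding \<phi>_def r_def by auto
  have \<phi>: "\<phi> * cnj \<phi> = 1"
    unfolding \<phi>_def r_def by (auto simp: complex_norm_square[symmetric] norm_divide)
  obtain \<alpha> \<beta> l1 l2 where "\<alpha> \<ge> 0" "\<beta> \<ge> 0" "\<alpha> + \<beta> = 1"
    and p: "Re (B $$ (0, 0)) = l1 * \<alpha> + l2 * \<beta>" and q: "Re (B $$ (1, 1)) = l1 * \<beta> + l2 * \<alpha>"
    and r: "r = (l1 - l2) * sqrt (\<alpha> * \<beta>)"
    using real_symmetric_2x2_eigen[of r "Re (B $$ (0, 0))" "Re (B $$ (1, 1))"] unfolding r_def by auto
  define a where "a = sqrt \<alpha>"
  define b where "b = sqrt \<beta>"
  have a2: "a\<^sup>2 = \<alpha>" and b2: "b\<^sup>2 = \<beta>" unfolding a_def b_def using \<open>\<alpha> \<ge> 0\<close> \<open>\<beta> \<ge> 0\<close> by simp_all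
  have diag: "B $$ (i, i) = complex_of_real (Re (B $$ (i, i)))" if "i < 2" for i
    using herm[OF that that] by (simp add: complex_eq_iff)
  have "a\<^sup>2 + b\<^sup>2 = 1" using \<open>\<alpha> + \<beta> = 1\<close> by (simp add: a2 b2)
  moreover have "B $$ (0, 0) = complex_of_real (l1 * a\<^sup>2 + l2 * b\<^sup>2)"
    using diag[of 0] p by (simp add: a2 b2 mult.commute)
  moreover have "B $$ (1, 1) = complex_of_real (l1 * b\<^sup>2 + l2 * a\<^sup>2)"
    using diag[of 1] q by (simp add: a2 b2 mult.commute)
  moreover have "r = (l1 - l2) * a * b" unfolding r a_def b_def by (simp add: real_sqrt_mult)
  then have "B $$ (0, 1) = \<phi> * complex_of_real ((l1 - l2) * a * b)" using z unfolding z_def by simp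
  moreover from this have "B $$ (1, 0) = cnj \<phi> * complex_of_real ((l1 - l2) * a * b)"
    using herm[of 1 0] by simp
  ultimately show ?thesis using spectral_dec_2x2[OF B _ \<phi>] by blast
qed

lemma norm_index_diff_le_trace_norm_2:
  assumes "A \<in> carrier_mat 2 2" and "B \<in> carrier_mat 2 2" and "i < 2" and "j < 2"
  shows "cmod (A $$ (i, j) - B $$ (i, j)) \<le> trace_norm (A - B)"
proof -
  have AB: "A - B \<in> carrier_mat 2 2" using assms(2) by (rule minus_carrier_mat)
  have "(A - B) $$ (i, j) = A $$ (i, j) - B $$ (i, j)" using assms carrier_matD[OF assms(2)] by simp
  moreover have "cmod ((A - B) $$ (i, j)) \<le> trace_norm (A - B)"
    by (rule norm_index_le_trace_norm[OF AB hermitian_mat_2_spectral_dec[OF hermitian_mat_adjoint_mult_self[OF AB]]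
          assms(3,4)])
  ultimately show ?thesis by simp
qed

section \<open>Two-level Hamiltonians\<close>

lemma spectral_dec_diag_eigenvalue:
  assumes dec: "spectral_dec n (mat_diag n (\<lambda>i. complex_of_real (h i))) V d" and k: "k < n"
  shows "\<exists>i<n. d k = h i"
proof -
  define H where "H = mat_diag n (\<lambda>i. complex_of_real (h i))"
  define D where "D = mat_diag n (\<lambda>i. complex_of_real (d i))"
  have U: "unitary_mat n V" and V: "V \<in> carrier_mat n n" and VV: "mat_adjoint V * V = 1\<^sub>m n"
    and H: "H = V * D * mat_adjoint V"
    using dec unfolding spectral_dec_def unitary_mat_def H_def D_def by auto
  have D: "D \<in> carrier_mat n n" unfolding D_def by simp
  have "H * V = V * D * (mat_adjoint V * V)"
    unfolding H using V D by (simp add: assoc_mult_mat[of _ n n _ n _ n] mult_carrier_mat[of _ n n])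
  then have HV: "H * V = V * D" by (simp add: VV right_mult_one_mat[OF mult_carrier_mat[OF V D]])
  have eigen: "complex_of_real (h i) * V $$ (i, k) = V $$ (i, k) * complex_of_real (d k)" if "i < n" for i
    using arg_cong[OF HV, of "\<lambda>M. M $$ (i, k)"] that k V
    unfolding H_def D_def by (simp add: mat_diag_mult_left[OF V] mat_diag_mult_right[OF V])
  have "(\<Sum>i<n. cnj (V $$ (i, k)) * V $$ (i, k)) = 1"
    using unitary_mat_cols_orthonormal[OF U k k] by simp
  then obtain i where "i < n" "V $$ (i, k) \<noteq> 0"
    by (metis (no_types, lifting) lessThan_iff mult_zero_right sum.neutral zero_neq_one)
  then show ?thesis using eigen[of i] by (intro exI[of _ i]) auto
qed

lemma unitary_conj_diag_affine:
  assumes dec: "spectral_dec n A V d" and f: "\<And>k. k < n \<Longrightarrow> f (d k) = \<alpha> + \<gamma> * d k"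
  shows "V * mat_diag n (\<lambda>i. complex_of_real (f (d i))) * mat_adjoint V
    = complex_of_real \<alpha> \<cdot>\<^sub>m 1\<^sub>m n + complex_of_real \<gamma> \<cdot>\<^sub>m A"
proof -
  have U: "unitary_mat n V" and V: "V \<in> carrier_mat n n"
    and A: "A = V * mat_diag n (\<lambda>i. complex_of_real (d i)) * mat_adjoint V"
    using dec unfolding spectral_dec_def unitary_mat_def by auto
  have "dim_row A = n" "dim_col A = n" using A V by simp_all
  show ?thesis
  proof (rule eq_matI)
    fix i j assume "i < dim_row (complex_of_real \<alpha> \<cdot>\<^sub>m 1\<^sub>m n + complex_of_real \<gamma> \<cdot>\<^sub>m A)"
      "j < dim_col (complex_of_real \<alpha> \<cdot>\<^sub>m 1\<^sub>m n + complex_of_real \<gamma> \<cdot>\<^sub>m A)"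
    then have i: "i < n" and j: "j < n" using \<open>dim_row A = n\<close> \<open>dim_col A = n\<close> by auto
    have "(V * mat_diag n (\<lambda>i. complex_of_real (f (d i))) * mat_adjoint V) $$ (i, j)
        = complex_of_real \<alpha> * (\<Sum>k<n. V $$ (i, k) * cnj (V $$ (j, k)))
          + complex_of_real \<gamma> * (\<Sum>k<n. V $$ (i, k) * complex_of_real (d k) * cnj (V $$ (j, k)))"
      unfolding index_mult_diag_mult_adjoint[OF V i j]
      by (simp add: f sum.distrib sum_distrib_left algebra_simps)
    also have "\<dots> = (complex_of_real \<alpha> \<cdot>\<^sub>m 1\<^sub>m n + complex_of_real \<gamma> \<cdot>\<^sub>m A) $$ (i, j)"
      unfolding unitary_mat_rows_orthonormal[OF U i j] A index_mult_diag_mult_adjoint[OF V i j, symmetric]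
      using V i j by simp
    finally show "(V * mat_diag n (\<lambda>i. complex_of_real (f (d i))) * mat_adjoint V) $$ (i, j) =
      (complex_of_real \<alpha> \<cdot>\<^sub>m 1\<^sub>m n + complex_of_real \<gamma> \<cdot>\<^sub>m A) $$ (i, j)" .
  qed (use V \<open>dim_row A = n\<close> \<open>dim_col A = n\<close> in simp_all)
qed

definition diag2 :: "real \<Rightarrow> real \<Rightarrow> complex mat" where
  "diag2 x y = mat_diag 2 (\<lambda>i. complex_of_real (if i = 0 then x else y))"

lemma diag2_carrier [simp]: "diag2 x y \<in> carrier_mat 2 2"
  unfolding diag2_def by simp

lemma diag2_dim [simp]: "dim_row (diag2 x y) = 2" "dim_col (diag2 x y) = 2"
  unfolding diag2_def mat_diag_def by simp_all

lemma index_diag2: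
  "i < 2 \<Longrightarrow> j < 2 \<Longrightarrow> diag2 x y $$ (i, j) = (if i = j then complex_of_real (if i = 0 then x else y) else 0)"
  unfolding diag2_def mat_diag_def by simp

text \<open>Since \<open>f\<close> agrees on the spectrum \<open>{x, y}\<close> with an affine function, this holds for whichever
  decomposition \<open>mat_fun\<close> picks.\<close>
lemma mat_fun_diag2:
  assumes "x \<noteq> y"
  shows "mat_fun f (diag2 x y) = diag2 (f x) (f y)"
proof -
  have "spectral_dec 2 (diag2 x y) (1\<^sub>m 2) (\<lambda>i. if i = 0 then x else y)"
    unfolding spectral_dec_def unitary_mat_def diag2_def
    by (simp add: left_mult_one_mat[of _ 2 2] right_mult_one_mat[of _ 2 2])
  then obtain V d where dec: "spectral_dec 2 (diag2 x y) V d"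
    and mf: "mat_fun f (diag2 x y) = V * mat_diag 2 (\<lambda>i. complex_of_real (f (d i))) * mat_adjoint V"
    using mat_fun_spectral_dec[of "diag2 x y"] by auto
  define \<gamma> where "\<gamma> = (f y - f x) / (y - x)"
  define \<alpha> where "\<alpha> = f x - \<gamma> * x"
  have "\<gamma> * (y - x) = f y - f x" unfolding \<gamma>_def using assms by simp
  then have fx: "f x = \<alpha> + \<gamma> * x" and fy: "f y = \<alpha> + \<gamma> * y"
    unfolding \<alpha>_def by (simp_all add: algebra_simps)
  have "d k = x \<or> d k = y" if "k < 2" for k
    using spectral_dec_diag_eigenvalue[OF dec[unfolded diag2_def] that] by auto
  then have "f (d k) = \<alpha> + \<gamma> * d k" if "k < 2" for k using that fx fy by auto
  then have "mat_fun f (diag2 x y) = complex_of_real \<alpha> \<cdot>\<^sub>m 1\<^sub>m 2 + complex_of_real \<gamma> \<cdot>\<^sub>m diag2 x y"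
    unfolding mf by (rule unitary_conj_diag_affine[OF dec])
  also have "\<dots> = diag2 (f x) (f y)"
    by (rule eq_matI) (auto simp: index_diag2 fx fy)
  finally show ?thesis .
qed

lemma psd_mat_diag2:
  assumes "x \<ge> 0" and "y \<ge> 0"
  shows "psd_mat 2 (diag2 x y)"
  unfolding psd_mat_def hermitian_mat_def
proof (intro conjI ballI)
  show "mat_adjoint (diag2 x y) = diag2 x y" by (rule eq_matI) (auto simp: index_diag2)
  fix v :: "complex vec" assume v: "v \<in> carrier_vec 2"
  have "conjugate v \<bullet> (diag2 x y *\<^sub>v v) = (\<Sum>i<2. cnj (v $ i) * (diag2 x y *\<^sub>v v) $ i)"
    unfolding scalar_prod_def using v by (simp add: atLeast0LessThan)
  also have "\<dots> = x * (cnj (v $ 0) * v $ 0) + y * (cnj (v $ 1) * v $ 1)"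
  proof -
    have "(diag2 x y *\<^sub>v v) $ i = (if i = 0 then x else y) * v $ i" if "i < 2" for i
      unfolding index_mult_mat_vec_sum[OF diag2_carrier v that] using that
      by (cases i) (simp_all add: numeral_2_eq_2 index_diag2)
    then show ?thesis by (simp add: numeral_2_eq_2)
  qed
  finally show "Re (conjugate v \<bullet> (diag2 x y *\<^sub>v v)) \<ge> 0"
    using assms by (simp add: mult.commute[of "cnj _"] complex_norm_square[symmetric])
qed simp

lemma mat_sqrt_diag2: "x \<noteq> y \<Longrightarrow> mat_sqrt (diag2 x y) = diag2 (sqrt x) (sqrt y)"
  unfolding mat_sqrt_def by (rule mat_fun_diag2)

lemma gibbs_state_diag2_carrier: "x \<noteq> y \<Longrightarrow> gibbs_state \<beta> (diag2 x y) \<in> carrier_mat 2 2"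
  unfolding gibbs_state_def Let_def mat_fun_diag2 by simp

lemma gibbs_state_diag2_index_0_0:
  assumes "x \<noteq> y"
  shows "gibbs_state \<beta> (diag2 x y) $$ (0, 0) = exp (- \<beta> * x) / (exp (- \<beta> * x) + exp (- \<beta> * y))"
proof -
  have "mat_trace (diag2 (exp (- \<beta> * x)) (exp (- \<beta> * y))) = exp (- \<beta> * x) + exp (- \<beta> * y)"
    unfolding mat_trace_def by (simp add: index_diag2 numeral_2_eq_2)
  then show ?thesis
    unfolding gibbs_state_def Let_def mat_fun_diag2[OF assms] by (simp add: index_diag2)
qed

text \<open>With \<open>\<beta>(y - x) = 1\<close> the two \<open>(0, 0)\<close> entries are \<open>1/(1 + e\<^sup>-\<^sup>1)\<close> and
  \<open>e\<^sup>-\<^sup>1/(1 + e\<^sup>-\<^sup>1)\<close>; their difference \<open>(1 - e\<^sup>-\<^sup>1)/(1 + e\<^sup>-\<^sup>1)\<close> exceeds \<open>1/3\<close> as \<open>e \<ge> 2\<close>.\<close>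
lemma gibbs_state_diag2_swap_gap:
  assumes "\<beta> * (y - x) = 1"
  shows "1 / 3 \<le> cmod (gibbs_state \<beta> (diag2 x y) $$ (0, 0) - gibbs_state \<beta> (diag2 y x) $$ (0, 0))"
proof -
  define u where "u = exp (- \<beta> * x)"
  define q :: real where "q = exp (- 1)"
  have "x \<noteq> y" using assms by auto
  have "u > 0" "q > 0" unfolding u_def q_def by simp_all
  have "exp (- \<beta> * y) = u * q" unfolding u_def q_def
    using assms by (simp flip: exp_add add: algebra_simps)
  then have "gibbs_state \<beta> (diag2 x y) $$ (0, 0) - gibbs_state \<beta> (diag2 y x) $$ (0, 0)
      = complex_of_real (u / (u + u * q) - u * q / (u * q + u))"
    unfolding gibbs_state_diag2_index_0_0[OF \<open>x \<noteq> y\<close>] gibbs_state_diag2_index_0_0[OF \<open>x \<noteq> y\<close>[symmetric]]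
      u_def[symmetric] by simp
  also have "u / (u + u * q) - u * q / (u * q + u) = (1 - q) / (1 + q)"
  proof -
    have e: "u + u * q = u * (1 + q)" "u * q + u = u * (1 + q)" by (simp_all add: algebra_simps)
    show ?thesis unfolding e using \<open>u > 0\<close> by (simp add: diff_divide_distrib)
  qed
  finally have diff: "gibbs_state \<beta> (diag2 x y) $$ (0, 0) - gibbs_state \<beta> (diag2 y x) $$ (0, 0)
      = complex_of_real ((1 - q) / (1 + q))" .
  have "q \<le> 1 / 2"
    using exp_ge_add_one_self[of 1] unfolding q_def by (simp add: exp_minus field_simps)
  then have "1 / 3 \<le> (1 - q) / (1 + q)" using \<open>q > 0\<close> by (simp add: field_simps)
  moreover have "(1 - q) / (1 + q) \<ge> 0" using \<open>q \<le> 1 / 2\<close> \<open>q > 0\<close> by simp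
  ultimately show ?thesis unfolding diff norm_of_real by linarith
qed

text \<open>The reflection \<open>[[C, S], [S, -C]]\<close> with \<open>C = diag(c\<^sub>0, c\<^sub>1)\<close> and
  \<open>S = diag(\<surd>(1 - c\<^sub>0\<^sup>2), \<surd>(1 - c\<^sub>1\<^sup>2))\<close>; index \<open>i\<close> stands for ancilla \<open>i div 2\<close> and system \<open>i mod 2\<close>.\<close>
definition diag2_encoding :: "real \<Rightarrow> real \<Rightarrow> complex mat" where
  "diag2_encoding c0 c1 = mat 4 4 (\<lambda>(i, j).
     let c = (if i mod 2 = 0 then c0 else c1) in
     complex_of_real (if i mod 2 \<noteq> j mod 2 then 0
       else if i < 2 \<and> j < 2 then c
       else if 2 \<le> i \<and> 2 \<le> j then - c
       else sqrt (1 - c\<^sup>2)))"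

lemma diag2_encoding_carrier [simp]: "diag2_encoding c0 c1 \<in> carrier_mat 4 4"
  unfolding diag2_encoding_def by simp

lemma diag2_encoding_dim [simp]: "dim_row (diag2_encoding c0 c1) = 4" "dim_col (diag2_encoding c0 c1) = 4"
  unfolding diag2_encoding_def by simp_all

lemma diag2_encoding_entries:
  "diag2_encoding c0 c1 $$ (0, 0) = c0" "diag2_encoding c0 c1 $$ (0, Suc 0) = 0"
  "diag2_encoding c0 c1 $$ (0, 2) = sqrt (1 - c0\<^sup>2)" "diag2_encoding c0 c1 $$ (0, 3) = 0"
  "diag2_encoding c0 c1 $$ (Suc 0, 0) = 0" "diag2_encoding c0 c1 $$ (Suc 0, Suc 0) = c1"
  "diag2_encoding c0 c1 $$ (Suc 0, 2) = 0" "diag2_encoding c0 c1 $$ (Suc 0, 3) = sqrt (1 - c1\<^sup>2)"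
  "diag2_encoding c0 c1 $$ (2, 0) = sqrt (1 - c0\<^sup>2)" "diag2_encoding c0 c1 $$ (2, Suc 0) = 0"
  "diag2_encoding c0 c1 $$ (2, 2) = - c0" "diag2_encoding c0 c1 $$ (2, 3) = 0"
  "diag2_encoding c0 c1 $$ (3, 0) = 0" "diag2_encoding c0 c1 $$ (3, Suc 0) = sqrt (1 - c1\<^sup>2)"
  "diag2_encoding c0 c1 $$ (3, 2) = 0" "diag2_encoding c0 c1 $$ (3, 3) = - c1"
  unfolding diag2_encoding_def by (simp_all add: Let_def)

lemma less_4_cases: "i < (4 :: nat) \<Longrightarrow> i = 0 \<or> i = Suc 0 \<or> i = 2 \<or> i = 3"
  by auto

lemma sum_lessThan_4: "(\<Sum>k<4 :: nat. f k) = f 0 + f (Suc 0) + f 2 + f 3"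
  by (simp add: eval_nat_numeral)

lemma mat_adjoint_diag2_encoding: "mat_adjoint (diag2_encoding c0 c1) = diag2_encoding c0 c1"
  by (rule eq_matI) (auto simp: diag2_encoding_def Let_def)

lemma unitary_diag2_encoding:
  assumes c0: "c0\<^sup>2 \<le> 1" and c1: "c1\<^sup>2 \<le> 1"
  shows "unitary_mat 4 (diag2_encoding c0 c1)"
proof -
  have "diag2_encoding c0 c1 * diag2_encoding c0 c1 = 1\<^sub>m 4"
  proof (rule eq_matI)
    fix i j assume "i < dim_row (1\<^sub>m 4 :: complex mat)" "j < dim_col (1\<^sub>m 4 :: complex mat)"
    then have i: "i < 4" and j: "j < 4" by auto
    have "sqrt (1 - c0\<^sup>2) * sqrt (1 - c0\<^sup>2) = 1 - c0\<^sup>2" "sqrt (1 - c1\<^sup>2) * sqrt (1 - c1\<^sup>2) = 1 - c1\<^sup>2"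
      using c0 c1 by simp_all
    then show "(diag2_encoding c0 c1 * diag2_encoding c0 c1) $$ (i, j) = (1\<^sub>m 4 :: complex mat) $$ (i, j)"
      unfolding index_mult_mat_sum[OF diag2_encoding_carrier diag2_encoding_carrier i j] sum_lessThan_4
      using less_4_cases[OF i] less_4_cases[OF j]
      by (elim disjE) (simp_all only: diag2_encoding_entries,
          simp_all add: power2_eq_square flip: of_real_mult of_real_add)
  qed simp_all
  then show ?thesis unfolding unitary_mat_def mat_adjoint_diag2_encoding by simp
qed

lemma block_encoding_diag2:
  assumes "c0\<^sup>2 \<le> 1" and "c1\<^sup>2 \<le> 1"
  shows "block_encoding 2 4 (diag2 c0 c1) (diag2_encoding c0 c1)"
  unfolding block_encoding_def
proof (intro conjI allI impI)
  fix i j :: nat assume "i < 2" "j < 2"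
  then have "i = 0 \<or> i = Suc 0" "j = 0 \<or> j = Suc 0" by auto
  then show "diag2_encoding c0 c1 $$ (i, j) = diag2 c0 c1 $$ (i, j)"
    by (elim disjE) (simp_all add: index_diag2 diag2_encoding_entries)
qed (use assms unitary_diag2_encoding in auto)

lemma cmod_power2_reflection:
  fixes a b :: real and u v :: complex
  shows "(cmod (a * u + b * v))\<^sup>2 + (cmod (b * u - a * v))\<^sup>2 = (a\<^sup>2 + b\<^sup>2) * ((cmod u)\<^sup>2 + (cmod v)\<^sup>2)"
  by (simp only: cmod_power2) (simp add: power2_eq_square algebra_simps)

lemma op_norm_le_diag2_encoding_swap_diff:
  fixes c0 c1 e :: real
  defines "s \<equiv> sqrt (1 - c0\<^sup>2) - sqrt (1 - c1\<^sup>2)"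
  assumes "e \<ge> 0" and "(c0 - c1)\<^sup>2 + s\<^sup>2 \<le> e\<^sup>2"
  shows "op_norm_le (diag2_encoding c0 c1 - diag2_encoding c1 c0) 4 e"
proof (rule op_norm_leI_power2[OF \<open>e \<ge> 0\<close>])
  fix w :: "complex vec" assume w: "w \<in> carrier_vec 4"
  define A where "A = diag2_encoding c0 c1 - diag2_encoding c1 c0"
  have A: "A \<in> carrier_mat 4 4" unfolding A_def by (rule minus_carrier_mat) simp
  have Aw: "(A *\<^sub>v w) $ i = (\<Sum>k<4. (diag2_encoding c0 c1 $$ (i, k) - diag2_encoding c1 c0 $$ (i, k)) * w $ k)"
    if "i < 4" for i
    unfolding index_mult_mat_vec_sum[OF A w that] unfolding A_def using that by (intro sum.cong refl) simp
  have r0: "(A *\<^sub>v w) $ 0 = (c0 - c1) * w $ 0 + s * w $ 2"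
    using Aw[of 0] by (simp add: sum_lessThan_4 diag2_encoding_entries s_def algebra_simps)
  have r2: "(A *\<^sub>v w) $ 2 = s * w $ 0 - (c0 - c1) * w $ 2"
    using Aw[of 2] by (simp add: sum_lessThan_4 diag2_encoding_entries s_def algebra_simps)
  have r1: "(A *\<^sub>v w) $ Suc 0 = - ((c0 - c1) * w $ Suc 0 + s * w $ 3)"
    using Aw[of 1] by (simp add: sum_lessThan_4 diag2_encoding_entries s_def algebra_simps)
  have r3: "(A *\<^sub>v w) $ 3 = - (s * w $ Suc 0 - (c0 - c1) * w $ 3)"
    using Aw[of 3] by (simp add: sum_lessThan_4 diag2_encoding_entries s_def algebra_simps)
  have "(vec_norm (A *\<^sub>v w))\<^sup>2 = (cmod ((A *\<^sub>v w) $ 0))\<^sup>2 + (cmod ((A *\<^sub>v w) $ Suc 0))\<^sup>2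
      + (cmod ((A *\<^sub>v w) $ 2))\<^sup>2 + (cmod ((A *\<^sub>v w) $ 3))\<^sup>2"
    using A by (simp add: vec_norm_power2 sum_lessThan_4 del: index_mult_mat_vec)
  also have "\<dots> = ((cmod ((c0 - c1) * w $ 0 + s * w $ 2))\<^sup>2 + (cmod (s * w $ 0 - (c0 - c1) * w $ 2))\<^sup>2)
      + ((cmod ((c0 - c1) * w $ Suc 0 + s * w $ 3))\<^sup>2 + (cmod (s * w $ Suc 0 - (c0 - c1) * w $ 3))\<^sup>2)"
    unfolding r0 r1 r2 r3 norm_minus_cancel by (simp only: add_ac)
  also have "\<dots> = ((c0 - c1)\<^sup>2 + s\<^sup>2) * (vec_norm w)\<^sup>2"
    unfolding cmod_power2_reflection using w by (simp add: vec_norm_power2 sum_lessThan_4 algebra_simps)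
  also have "\<dots> \<le> e\<^sup>2 * (vec_norm w)\<^sup>2" using assms(3) by (intro mult_right_mono) auto
  finally show "(vec_norm ((diag2_encoding c0 c1 - diag2_encoding c1 c0) *\<^sub>v w))\<^sup>2 \<le> e\<^sup>2 * (vec_norm w)\<^sup>2"
    unfolding A_def .
qed

lemma abs_sqrt_diff_le:
  assumes "u \<ge> 1 / 4" and "v \<ge> 1 / 4"
  shows "\<bar>sqrt u - sqrt v\<bar> \<le> \<bar>u - v\<bar>"
proof -
  have "sqrt u \<ge> 1 / 2" "sqrt v \<ge> 1 / 2"
    using real_sqrt_le_mono[OF assms(1)] real_sqrt_le_mono[OF assms(2)] by (simp_all add: real_sqrt_divide)
  moreover have "\<bar>u - v\<bar> = \<bar>sqrt u - sqrt v\<bar> * (sqrt u + sqrt v)"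
  proof -
    have "u - v = (sqrt u - sqrt v) * (sqrt u + sqrt v)" using assms by (simp add: algebra_simps)
    then show ?thesis using calculation by (simp add: abs_mult)
  qed
  ultimately show ?thesis by (simp add: mult_le_cancel_left1)
qed

lemma op_norm_le_diag2_encoding_sqrt_swap_diff:
  assumes "1 / 4 \<le> a" "a \<le> 3 / 4" "1 / 4 \<le> b" "b \<le> 3 / 4"
  shows "op_norm_le (diag2_encoding (sqrt a) (sqrt b) - diag2_encoding (sqrt b) (sqrt a)) 4 (2 * \<bar>a - b\<bar>)"
proof (rule op_norm_le_diag2_encoding_swap_diff)
  have "\<bar>sqrt a - sqrt b\<bar> \<le> \<bar>a - b\<bar>" and "\<bar>sqrt (1 - a) - sqrt (1 - b)\<bar> \<le> \<bar>a - b\<bar>"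
    using abs_sqrt_diff_le[of a b] abs_sqrt_diff_le[of "1 - a" "1 - b"] assms by simp_all
  then have "(sqrt a - sqrt b)\<^sup>2 \<le> (a - b)\<^sup>2" and "(sqrt (1 - a) - sqrt (1 - b))\<^sup>2 \<le> (a - b)\<^sup>2"
    by (simp_all add: abs_le_square_iff)
  then have "(sqrt a - sqrt b)\<^sup>2 + (sqrt (1 - a) - sqrt (1 - b))\<^sup>2 \<le> 2 * (a - b)\<^sup>2" by linarith
  also have "\<dots> \<le> (2 * \<bar>a - b\<bar>)\<^sup>2" by (simp add: power_mult_distrib)
  finally show "(sqrt a - sqrt b)\<^sup>2 + (sqrt (1 - (sqrt a)\<^sup>2) - sqrt (1 - (sqrt b)\<^sup>2))\<^sup>2 \<le> (2 * \<bar>a - b\<bar>)\<^sup>2"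
    using assms by simp
qed simp

lemma alg_output_carrier: "alg_output N M R S V0 steps U \<in> carrier_mat N N"
  unfolding alg_output_def partial_trace_2_def by simp

lemma solves_gibbs_diag2:
  assumes "solves_gibbs \<beta> 2 4 R S V0 steps" and "0 \<le> a" "a \<le> 1" "0 \<le> b" "b \<le> 1" "a \<noteq> b"
  shows "cmod (alg_output 2 4 R S V0 steps (diag2_encoding (sqrt a) (sqrt b)) $$ (0, 0)
    - gibbs_state \<beta> (diag2 a b) $$ (0, 0)) \<le> 0.01"
proof -
  have "block_encoding 2 4 (mat_sqrt (diag2 a b)) (diag2_encoding (sqrt a) (sqrt b))"
    unfolding mat_sqrt_diag2[OF \<open>a \<noteq> b\<close>] using assms by (intro block_encoding_diag2) auto
  moreover have "psd_mat 2 (diag2 a b)" using assms by (intro psd_mat_diag2)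
  ultimately have "trace_norm (alg_output 2 4 R S V0 steps (diag2_encoding (sqrt a) (sqrt b))
      - gibbs_state \<beta> (diag2 a b)) \<le> 0.01"
    using assms(1) unfolding solves_gibbs_def by blast
  then show ?thesis
    by (rule order_trans[rotated, OF _ norm_index_diff_le_trace_norm_2[OF alg_output_carrier
          gibbs_state_diag2_carrier[OF \<open>a \<noteq> b\<close>]]]) simp_all
qed

lemma gibbs_query_lower_bound:
  assumes "\<beta> \<ge> 4" and alg: "valid_alg 2 4 R S V0 steps" and solves: "solves_gibbs \<beta> 2 4 R S V0 steps"
  shows "\<beta> / 20 \<le> real (length steps)"
proof -
  define a :: real where "a = 1 / 4"
  define b where "b = 1 / 4 + 1 / \<beta>"
  have "0 < 1 / \<beta>" "1 / \<beta> \<le> 1 / 4" using \<open>\<beta> \<ge> 4\<close> by (simp_all add: field_simps)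
  then have ab: "1 / 4 \<le> a" "a \<le> 3 / 4" "1 / 4 \<le> b" "b \<le> 3 / 4" "a \<noteq> b" "\<bar>a - b\<bar> = 1 / \<beta>"
    unfolding a_def b_def by linarith+
  have "\<beta> * (b - a) = 1" unfolding a_def b_def using \<open>\<beta> \<ge> 4\<close> by simp
  define U1 where "U1 = diag2_encoding (sqrt a) (sqrt b)"
  define U2 where "U2 = diag2_encoding (sqrt b) (sqrt a)"
  have "op_norm_le (U1 - U2) 4 (2 / \<beta>)"
    using op_norm_le_diag2_encoding_sqrt_swap_diff[of a b] ab unfolding U1_def U2_def by simp
  moreover have U1: "unitary_mat 4 U1" and U2: "unitary_mat 4 U2"
    unfolding U1_def U2_def using ab by (auto intro!: unitary_diag2_encoding)
  moreover have "mat_adjoint U1 = U1" "mat_adjoint U2 = U2"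
    unfolding U1_def U2_def by (rule mat_adjoint_diag2_encoding)+
  ultimately have "cmod (alg_output 2 4 R S V0 steps U1 $$ (0, 0) - alg_output 2 4 R S V0 steps U2 $$ (0, 0))
      \<le> 2 * real (length steps) * (2 / \<beta>)"
    using \<open>\<beta> \<ge> 4\<close> by (intro alg_output_index_0_0_diff_le[OF alg]) auto
  moreover have "cmod (gibbs_state \<beta> (diag2 a b) $$ (0, 0) - alg_output 2 4 R S V0 steps U1 $$ (0, 0)) \<le> 0.01"
    and "cmod (alg_output 2 4 R S V0 steps U2 $$ (0, 0) - gibbs_state \<beta> (diag2 b a) $$ (0, 0)) \<le> 0.01"
    using solves_gibbs_diag2[OF solves, of a b] solves_gibbs_diag2[OF solves, of b a] ab
    unfolding U1_def U2_def by (auto simp: norm_minus_commute)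
  ultimately have "cmod (gibbs_state \<beta> (diag2 a b) $$ (0, 0) - gibbs_state \<beta> (diag2 b a) $$ (0, 0))
      \<le> 0.01 + (2 * real (length steps) * (2 / \<beta>) + 0.01)"
    by (blast intro: norm_diff_triangle_le)
  then have "1 / 3 \<le> 0.01 + (2 * real (length steps) * (2 / \<beta>) + 0.01)"
    using gibbs_state_diag2_swap_gap[OF \<open>\<beta> * (b - a) = 1\<close>] by linarith
  then show ?thesis using \<open>\<beta> \<ge> 4\<close> by (simp add: field_simps)
qed

theorem theorem2p52:
  shows "\<exists>c > (0::real). \<forall>\<beta> \<ge> (4::real). \<exists>N M. 0 < N \<and> N \<le> M \<and>
     (\<forall>R S V0 steps. valid_alg N M R S V0 steps \<longrightarrow> solves_gibbs \<beta> N M R S V0 steps \<longrightarrow>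
        real (length steps) \<ge> c * \<beta>)"
  using gibbs_query_lower_bound by (intro exI[of _ "1 / 20"] conjI allI impI exI[of _ 2] exI[of _ 4]) auto

end
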